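(* Let $\mathfrak{K}=\mathbb{Q}(p_1,\dots,p_\ell)$, let $R=\mathfrak{K}[x_1,\dots,x_n]$, and let $h_1,\dots,h_n\in R$ generate an ideal $I=\langle h_1,\dots,h_n\rangle\subset R$ that is generically radical and zero-dimensional. Fix $d\ge 0$, $p^*\in\mathbb{C}^\ell$, points $q_1,\dots,q_k\in\mathbb{C}^n$, and let $S_d(q_1,\dots,q_k)$ be a $k\times k$ submatrix of $M_d(q_1,\dots,q_k)$, obtained by selecting $k$ fixed columns; write $S_d(y_1,\dots,y_k)$ for the same column selection applied to $M_d(y_1,\dots,y_k)$. Let $G_{p^*}(x)=[h_{1,p^*}(x),\dots,h_{n,p^*}(x)]^T$. Suppose the well-constrained polynomial system in the unknowns $y_1,\dots,y_k\in\mathbb{C}^n$ and $\Lambda\in\mathbb{C}^{k\times k}$, $$\mathcal{G}(y_1,\dots,y_k,\Lambda)=\begin{bmatrix}G_{p^*}(y_1)\\ \vdots\\ G_{p^*}(y_k)\\ \Lambda\cdot S_d(y_1,\dots,y_k)-\mathbf{I}\end{bmatrix},$$ where $\mathbf{I}$ is the $k\times k$ identity matrix, has a nonsingular solution. Then $\mathrm{HF}_I(d)\ge k$.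
   Context: $\mathbb{Q}(p_1,\dots,p_\ell)$ is the field of rational functions in parameters $p=(p_1,\dots,p_\ell)$ with rational coefficients. For $h\in R$ and $p^*\in\mathbb{C}^\ell$, $h_{p^*}\in\mathbb{C}[x_1,\dots,x_n]$ denotes the polynomial obtained by specializing $p$ to $p^*$ (when all coefficients of $h$ are defined at $p^*$). $I$ is generically radical and zero-dimensional means: for general $p^*\in\mathbb{C}^\ell$, the ideal $I_{p^*}=\langle h_{1,p^*},\dots,h_{n,p^*}\rangle\subset\mathbb{C}[x_1,\dots,x_n]$ satisfies $\#\mathcal{V}(I_{p^*})=\deg I_{p^*}<\infty$. For $d\ge0$, $I_{\le d}$ denotes the $\mathfrak{K}$-vector space of polynomials in $I$ of degree at most $d$, and the affine Hilbert function is $\mathrm{HF}_I(d)=\binom{n+d}{d}-\dim_{\mathfrak{K}}(I_{\le d})$. The degree-$\le d$ Veronese map $\nu_d:\mathbb{C}^n\to\mathbb{C}^{\binom{n+d}{d}}$ sends $x$ to the row vector of all monomials in $x_1,\dots,x_n$ of degree at most $d$ (in a fixed order), and $M_d(y_1,\dots,y_k)$ is the $k\times\binom{n+d}{d}$ matrix whose $j$-th row is $\nu_d(y_j)$. A solution is nonsingular if the Jacobian of the system at it is invertible. *)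

theory Defs
  imports "HOL-Library.Poly_Mapping" "HOL-Computational_Algebra.Fraction_Field"
          "Jordan_Normal_Form.Determinant" "HOL-Analysis.Derivative"
begin

(* multivariate polynomials: exponent vectors (variable index \<Rightarrow>\<^sub>0 exponent) \<Rightarrow>\<^sub>0 coefficient *)
type_synonym 'a mpoly = "(nat \<Rightarrow>\<^sub>0 nat) \<Rightarrow>\<^sub>0 'a"

(* Q[p_1,...] and the field of rational functions in the parameters *)
type_synonym qpoly = "rat mpoly"
type_synonym kfield = "qpoly fract"

definition tdeg :: "(nat \<Rightarrow>\<^sub>0 nat) \<Rightarrow> nat" where
  "tdeg m = (\<Sum>i\<in>Poly_Mapping.keys m. Poly_Mapping.lookup m i)"

definition mono_eval :: "(nat \<Rightarrow>\<^sub>0 nat) \<Rightarrow> (nat \<Rightarrow> 'b::comm_ring_1) \<Rightarrow> 'b" where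
  "mono_eval m x = (\<Prod>i\<in>Poly_Mapping.keys m. x i ^ Poly_Mapping.lookup m i)"

definition mpolys :: "nat \<Rightarrow> ('a::zero) mpoly set" where
  "mpolys n = {f. \<forall>m\<in>Poly_Mapping.keys f. Poly_Mapping.keys m \<subseteq> {..<n}}"

definition meval :: "complex mpoly \<Rightarrow> (nat \<Rightarrow> complex) \<Rightarrow> complex" where
  "meval f x = (\<Sum>m\<in>Poly_Mapping.keys f. Poly_Mapping.lookup f m * mono_eval m x)"

definition qeval :: "qpoly \<Rightarrow> (nat \<Rightarrow> complex) \<Rightarrow> complex" where
  "qeval f x = (\<Sum>m\<in>Poly_Mapping.keys f. of_rat (Poly_Mapping.lookup f m) * mono_eval m x)"

definition in_K :: "nat \<Rightarrow> kfield \<Rightarrow> bool" where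
  "in_K l c = (\<exists>a b. b \<noteq> 0 \<and> a \<in> mpolys l \<and> b \<in> mpolys l \<and> c = Fract a b)"

definition kdefined :: "kfield \<Rightarrow> (nat \<Rightarrow> complex) \<Rightarrow> bool" where
  "kdefined c p = (\<exists>a b. c = Fract a b \<and> qeval b p \<noteq> 0)"

definition kval :: "kfield \<Rightarrow> (nat \<Rightarrow> complex) \<Rightarrow> complex" where
  "kval c p = (THE v. \<exists>a b. c = Fract a b \<and> qeval b p \<noteq> 0 \<and> v = qeval a p / qeval b p)"

definition coeffs_defined :: "kfield mpoly \<Rightarrow> (nat \<Rightarrow> complex) \<Rightarrow> bool" where
  "coeffs_defined h p = (\<forall>m\<in>Poly_Mapping.keys h. kdefined (Poly_Mapping.lookup h m) p)"

definition spec :: "kfield mpoly \<Rightarrow> (nat \<Rightarrow> complex) \<Rightarrow> complex mpoly" where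
  "spec h p = Poly_Mapping.map (\<lambda>c. kval c p) h"

definition ideal_gen :: "nat \<Rightarrow> ('a::comm_ring_1) mpoly list \<Rightarrow> 'a mpoly set" where
  "ideal_gen n hs = {\<Sum>i<length hs. g i * hs ! i | g. \<forall>i<length hs. g i \<in> mpolys n}"

definition cscale :: "'a::comm_ring_1 \<Rightarrow> 'a mpoly \<Rightarrow> 'a mpoly" where
  "cscale c f = Poly_Mapping.single 0 c * f"

definition quot_dim :: "nat \<Rightarrow> complex mpoly set \<Rightarrow> nat \<Rightarrow> bool" where
  "quot_dim n J N = (\<exists>B. finite B \<and> card B = N \<and> B \<subseteq> mpolys n \<and>
      (\<forall>c. (\<Sum>b\<in>B. cscale (c b) b) \<in> J \<longrightarrow> (\<forall>b\<in>B. c b = 0)) \<and>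
      (\<forall>f\<in>mpolys n. \<exists>c. f - (\<Sum>b\<in>B. cscale (c b) b) \<in> J))"

(* points of C^n, encoded as functions vanishing at indices >= n *)
definition variety :: "nat \<Rightarrow> complex mpoly list \<Rightarrow> (nat \<Rightarrow> complex) set" where
  "variety n gs = {x. (\<forall>i\<ge>n. x i = 0) \<and> (\<forall>g\<in>set gs. meval g x = 0)}"

definition generically_radical_zero_dim :: "nat \<Rightarrow> nat \<Rightarrow> kfield mpoly list \<Rightarrow> bool" where
  "generically_radical_zero_dim l n hs =
     (\<exists>g::complex mpoly. g \<in> mpolys l \<and> g \<noteq> 0 \<and>
        (\<forall>p. meval g p \<noteq> 0 \<longrightarrow>
           (\<forall>h\<in>set hs. coeffs_defined h p) \<and>
           (let gs = map (\<lambda>h. spec h p) hs in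
              finite (variety n gs) \<and> quot_dim n (ideal_gen n gs) (card (variety n gs)))))"

definition ideal_le :: "kfield mpoly set \<Rightarrow> nat \<Rightarrow> kfield mpoly set" where
  "ideal_le I d = {f\<in>I. \<forall>m\<in>Poly_Mapping.keys f. tdeg m \<le> d}"

definition HF :: "nat \<Rightarrow> kfield mpoly set \<Rightarrow> nat \<Rightarrow> int" where
  "HF n I d = int ((n + d) choose d) - int (vector_space.dim (cscale :: kfield \<Rightarrow> _) (ideal_le I d))"

(* the square system G(y_1..y_k, Lambda); unknowns z indexed:
   y_j coordinate i  \<mapsto> j*n + i   (j<k, i<n),
   Lambda_{a,b}      \<mapsto> k*n + a*k + b (a,b<k) *)
definition yvec :: "nat \<Rightarrow> (nat \<Rightarrow> complex) \<Rightarrow> nat \<Rightarrow> nat \<Rightarrow> complex" where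
  "yvec n z j = (\<lambda>i. if i < n then z (j*n + i) else 0)"

definition sysG :: "nat \<Rightarrow> nat \<Rightarrow> complex mpoly list \<Rightarrow> (nat \<Rightarrow>\<^sub>0 nat) list
                    \<Rightarrow> nat \<Rightarrow> (nat \<Rightarrow> complex) \<Rightarrow> complex" where
  "sysG n k gs sel r z =
     (if r < k*n then meval (gs ! (r mod n)) (yvec n z (r div n))
      else (let a = (r - k*n) div k; b = (r - k*n) mod k in
        (\<Sum>c<k. z (k*n + a*k + c) * mono_eval (sel ! b) (yvec n z c))
        - (if a = b then 1 else 0)))"

definition jacobian :: "nat \<Rightarrow> (nat \<Rightarrow> (nat \<Rightarrow> complex) \<Rightarrow> complex) \<Rightarrow> (nat \<Rightarrow> complex) \<Rightarrow> complex Matrix.mat" where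
  "jacobian N F z = Matrix.mat N N (\<lambda>(r, c). deriv (\<lambda>t. F r (z(c := t))) (z c))"

end

theory Submission
  imports Defs "HOL-Computational_Algebra.Polynomial"
begin

text \<open>A nonsingular solution of the square system at \<open>p*\<close> persists: for every parameter \<open>p\<close>
  near \<open>p*\<close> the system still has a solution \<open>(y\<^sub>1, ..., y\<^sub>k, Lambda)\<close>. This implicit function
  theorem is proved by a simplified Newton iteration, with Caratheodory slopes in place of
  derivatives, because slopes of polynomial expressions come from sums and products alone.
  A nonzero polynomial does not vanish on a neighbourhood of \<open>p*\<close>, so some such \<open>p\<close> is generic:
  all coefficients of the generators and of an ideal membership certificate are defined at \<open>p\<close>,
  and a prescribed nonzero coefficient stays nonzero.

  Let \<open>f \<in> I\<^sub>\<le>\<^sub>d\<close> be supported on the \<open>k\<close> selected monomials. Its specialisation at \<open>p\<close>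
  vanishes at \<open>y\<^sub>1, ..., y\<^sub>k\<close>, i.e. \<open>S\<^sub>d(y)\<close> kills the coefficient vector of \<open>f\<close>, and
  \<open>Lambda S\<^sub>d(y) = I\<close> forces that vector to be zero. Hence \<open>I\<^sub>\<le>\<^sub>d\<close> meets the span of the
  selected monomials trivially and \<open>dim I\<^sub>\<le>\<^sub>d \<le> binom(n + d, d) - k\<close>.\<close>

section \<open>Evaluating polynomials through a partial ring homomorphism\<close>

definition meval_with :: "('a::zero \<Rightarrow> 'b::comm_ring_1) \<Rightarrow> 'a mpoly \<Rightarrow> (nat \<Rightarrow> 'b) \<Rightarrow> 'b" where
  "meval_with \<phi> f x = (\<Sum>m\<in>Poly_Mapping.keys f. \<phi> (Poly_Mapping.lookup f m) * mono_eval m x)"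

text \<open>Specialisation \<open>kval _ p\<close> is a homomorphism only on the subring of elements of \<open>K\<close> that are
  defined at \<open>p\<close>.\<close>

definition ring_hom_on :: "'a::comm_ring_1 set \<Rightarrow> ('a \<Rightarrow> 'b::comm_ring_1) \<Rightarrow> bool" where
  "ring_hom_on S \<phi> \<longleftrightarrow> 0 \<in> S \<and> \<phi> 0 = 0 \<and> (\<forall>a\<in>S. \<forall>b\<in>S. a + b \<in> S \<and> a * b \<in> S \<and>
      \<phi> (a + b) = \<phi> a + \<phi> b \<and> \<phi> (a * b) = \<phi> a * \<phi> b)"

definition coeffs_in :: "'a::zero set \<Rightarrow> 'a mpoly \<Rightarrow> bool" where
  "coeffs_in S f \<longleftrightarrow> (\<forall>m. Poly_Mapping.lookup f m \<in> S)"

lemma keys_add_monomials: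
  "Poly_Mapping.keys (a + b :: nat \<Rightarrow>\<^sub>0 nat) = Poly_Mapping.keys a \<union> Poly_Mapping.keys b"
  by (auto simp: in_keys_iff lookup_add)

lemma mono_eval_superset:
  assumes "finite U" "Poly_Mapping.keys m \<subseteq> U"
  shows "mono_eval m x = (\<Prod>i\<in>U. x i ^ Poly_Mapping.lookup m i)"
  unfolding mono_eval_def
  by (rule prod.mono_neutral_left) (use assms in \<open>auto simp: in_keys_iff\<close>)

lemma mono_eval_zero [simp]: "mono_eval 0 x = 1"
  by (simp add: mono_eval_def)

lemma mono_eval_add: "mono_eval (a + b) x = mono_eval a x * mono_eval b x"
proof -
  let ?U = "Poly_Mapping.keys a \<union> Poly_Mapping.keys b"
  have "mono_eval (a + b) x = (\<Prod>i\<in>?U. x i ^ Poly_Mapping.lookup (a + b) i)"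
    by (rule mono_eval_superset) (auto simp: keys_add_monomials)
  also have "\<dots> = (\<Prod>i\<in>?U. x i ^ Poly_Mapping.lookup a i) * (\<Prod>i\<in>?U. x i ^ Poly_Mapping.lookup b i)"
    by (simp add: lookup_add power_add prod.distrib)
  also have "\<dots> = mono_eval a x * mono_eval b x"
    by (subst (1 2) mono_eval_superset[where U = ?U]) auto
  finally show ?thesis .
qed

lemma mono_eval_single: "mono_eval (Poly_Mapping.single v e) x = x v ^ e"
  by (cases "e = 0") (auto simp: mono_eval_def)

lemma monomial_split_var:
  "m = Poly_Mapping.update v 0 m + Poly_Mapping.single v (Poly_Mapping.lookup m v)"
  by (rule poly_mapping_eqI) (auto simp: lookup_update lookup_add lookup_single when_def)

lemma mono_eval_split_var:
  "mono_eval m x = mono_eval (Poly_Mapping.update v 0 m) x * x v ^ Poly_Mapping.lookup m v"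
  using arg_cong[OF monomial_split_var[of m v], of "\<lambda>m. mono_eval m x"]
  by (simp add: mono_eval_add mono_eval_single)

lemma mono_eval_upd_indep:
  "v \<notin> Poly_Mapping.keys m \<Longrightarrow> mono_eval m (x(v := t)) = mono_eval m x"
  unfolding mono_eval_def by (intro prod.cong) auto

lemma poly_mapping_sum_single:
  "(\<Sum>a\<in>Poly_Mapping.keys f. Poly_Mapping.single a (Poly_Mapping.lookup f a)) = f"
  by (rule poly_mapping_eqI)
     (auto simp: lookup_sum lookup_single when_def in_keys_iff sum.delta' split: if_splits)

lemma mult_as_sum_single:
  fixes f g :: "'a::comm_ring_1 mpoly"
  shows "f * g = (\<Sum>a\<in>Poly_Mapping.keys f. \<Sum>b\<in>Poly_Mapping.keys g.
      Poly_Mapping.single (a + b) (Poly_Mapping.lookup f a * Poly_Mapping.lookup g b))"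
proof -
  have "f * g = (\<Sum>a\<in>Poly_Mapping.keys f. Poly_Mapping.single a (Poly_Mapping.lookup f a)) *
                (\<Sum>b\<in>Poly_Mapping.keys g. Poly_Mapping.single b (Poly_Mapping.lookup g b))"
    by (simp only: poly_mapping_sum_single)
  then show ?thesis
    by (simp add: sum_distrib_left sum_distrib_right mult_single sum.swap[of _ "Poly_Mapping.keys g"])
qed

lemma meval_with_superset:
  assumes "finite U" "Poly_Mapping.keys f \<subseteq> U" "\<phi> 0 = 0"
  shows "meval_with \<phi> f x = (\<Sum>m\<in>U. \<phi> (Poly_Mapping.lookup f m) * mono_eval m x)"
  unfolding meval_with_def
  by (rule sum.mono_neutral_left) (use assms in \<open>auto simp: in_keys_iff\<close>)

lemma meval_with_single:
  "\<phi> 0 = 0 \<Longrightarrow> meval_with \<phi> (Poly_Mapping.single m c) x = \<phi> c * mono_eval m x"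
  by (cases "c = 0") (auto simp: meval_with_def)

lemma coeffs_in_add: "ring_hom_on S \<phi> \<Longrightarrow> coeffs_in S f \<Longrightarrow> coeffs_in S g \<Longrightarrow> coeffs_in S (f + g)"
  by (auto simp: coeffs_in_def ring_hom_on_def lookup_add)

lemma coeffs_in_zero: "ring_hom_on S \<phi> \<Longrightarrow> coeffs_in S 0"
  by (simp add: coeffs_in_def ring_hom_on_def)

lemma coeffs_in_sum:
  "ring_hom_on S \<phi> \<Longrightarrow> (\<And>i. i \<in> A \<Longrightarrow> coeffs_in S (F i)) \<Longrightarrow> coeffs_in S (\<Sum>i\<in>A. F i)"
  by (induction A rule: infinite_finite_induct) (auto intro: coeffs_in_add coeffs_in_zero)

lemma coeffs_in_mult:
  assumes S: "ring_hom_on S \<phi>" and "coeffs_in S f" "coeffs_in S g"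
  shows "coeffs_in S (f * g)"
  unfolding mult_as_sum_single using assms
  by (intro coeffs_in_sum[OF S]) (auto simp: coeffs_in_def ring_hom_on_def lookup_single when_def)

lemma meval_with_add:
  assumes "ring_hom_on S \<phi>" "coeffs_in S f" "coeffs_in S g"
  shows "meval_with \<phi> (f + g) x = meval_with \<phi> f x + meval_with \<phi> g x"
  unfolding meval_with_def
  by (rule setsum_keys_plus_distrib) (use assms in \<open>auto simp: ring_hom_on_def coeffs_in_def distrib_right\<close>)

lemma meval_with_sum:
  assumes S: "ring_hom_on S \<phi>" and "\<And>i. i \<in> A \<Longrightarrow> coeffs_in S (F i)"
  shows "meval_with \<phi> (\<Sum>i\<in>A. F i) x = (\<Sum>i\<in>A. meval_with \<phi> (F i) x)"
  using assms(2)
proof (induction A rule: infinite_finite_induct)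
  case (insert a A)
  then show ?case
    by (simp add: meval_with_add[OF S] coeffs_in_sum[OF S])
qed (simp_all add: meval_with_def)

lemma meval_with_mult:
  assumes S: "ring_hom_on S \<phi>" and f: "coeffs_in S f" and g: "coeffs_in S g"
  shows "meval_with \<phi> (f * g) x = meval_with \<phi> f x * meval_with \<phi> g x"
proof -
  have hom: "\<phi> 0 = 0" "\<And>a b. a \<in> S \<Longrightarrow> b \<in> S \<Longrightarrow> a * b \<in> S \<and> \<phi> (a * b) = \<phi> a * \<phi> b"
    using S by (auto simp: ring_hom_on_def)
  have coeffs: "Poly_Mapping.lookup f a \<in> S" "Poly_Mapping.lookup g b \<in> S" for a b
    using f g by (auto simp: coeffs_in_def)
  have single_in: "coeffs_in S (Poly_Mapping.single (a + b) (Poly_Mapping.lookup f a * Poly_Mapping.lookup g b))"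
    for a b using hom coeffs S by (auto simp: coeffs_in_def ring_hom_on_def lookup_single when_def)
  have "meval_with \<phi> (f * g) x = (\<Sum>a\<in>Poly_Mapping.keys f. \<Sum>b\<in>Poly_Mapping.keys g.
      \<phi> (Poly_Mapping.lookup f a) * mono_eval a x * (\<phi> (Poly_Mapping.lookup g b) * mono_eval b x))"
    unfolding mult_as_sum_single
    by (simp add: meval_with_sum[OF S] coeffs_in_sum[OF S] single_in meval_with_single hom coeffs
                  mono_eval_add mult_ac)
  also have "\<dots> = meval_with \<phi> f x * meval_with \<phi> g x"
    by (simp add: meval_with_def sum_product)
  finally show ?thesis .
qed

lemma ring_hom_on_of_rat: "ring_hom_on UNIV (of_rat :: rat \<Rightarrow> complex)"
  by (simp add: ring_hom_on_def of_rat_add of_rat_mult)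

lemma qeval_eq_meval_with: "qeval f x = meval_with of_rat f x"
  by (simp add: qeval_def meval_with_def)

lemma qeval_mult: "qeval (f * g) x = qeval f x * qeval g x"
  unfolding qeval_eq_meval_with
  by (rule meval_with_mult[OF ring_hom_on_of_rat]) (auto simp: coeffs_in_def)

lemma qeval_add: "qeval (f + g) x = qeval f x + qeval g x"
  unfolding qeval_eq_meval_with
  by (rule meval_with_add[OF ring_hom_on_of_rat]) (auto simp: coeffs_in_def)

lemma qeval_zero [simp]: "qeval 0 x = 0"
  by (simp add: qeval_def)

lemma qeval_one [simp]: "qeval 1 x = 1"
  by (simp add: qeval_def)

lemma qeval_prod: "qeval (\<Prod>i\<in>A. F i) x = (\<Prod>i\<in>A. qeval (F i) x)"
  by (induction A rule: infinite_finite_induct) (simp_all add: qeval_mult)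

section \<open>Specialising the coefficient field\<close>

lemma kval_eq:
  assumes "c = Fract a b" "qeval b p \<noteq> 0"
  shows "kval c p = qeval a p / qeval b p"
  unfolding kval_def
proof (rule the_equality)
  show "\<exists>a' b'. c = Fract a' b' \<and> qeval b' p \<noteq> 0 \<and> qeval a p / qeval b p = qeval a' p / qeval b' p"
    using assms by blast
next
  fix v assume "\<exists>a' b'. c = Fract a' b' \<and> qeval b' p \<noteq> 0 \<and> v = qeval a' p / qeval b' p"
  then obtain a' b' where c: "c = Fract a' b'" and b': "qeval b' p \<noteq> 0" and v: "v = qeval a' p / qeval b' p"
    by blast
  have "b \<noteq> 0" "b' \<noteq> 0"
    using assms(2) b' by auto
  then have "a * b' = a' * b"
    using assms(1) c eq_fract(1) by metis
  then have "qeval a p * qeval b' p = qeval a' p * qeval b p"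
    by (metis qeval_mult)
  then show "v = qeval a p / qeval b p"
    using v b' assms(2) by (simp add: frac_eq_eq)
qed

lemma kval_zero [simp]: "kval 0 p = 0"
  using kval_eq[of 0 0 1 p] by (simp add: fract_collapse)

lemma kdefined_zero: "kdefined 0 p"
  unfolding kdefined_def by (rule exI[of _ 0], rule exI[of _ 1]) (simp add: fract_collapse)

lemma ring_hom_on_kval: "ring_hom_on {c. kdefined c p} (\<lambda>c. kval c p)"
  unfolding ring_hom_on_def
proof (intro conjI ballI)
  fix x y assume "x \<in> {c. kdefined c p}" "y \<in> {c. kdefined c p}"
  then obtain a b c d where x: "x = Fract a b" "qeval b p \<noteq> 0" and y: "y = Fract c d" "qeval d p \<noteq> 0"
    unfolding kdefined_def by blast
  have "b \<noteq> 0" "d \<noteq> 0"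
    using x y by auto
  then have sum: "x + y = Fract (a * d + c * b) (b * d)" and prod: "x * y = Fract (a * c) (b * d)"
    using x y by simp_all
  have bd: "qeval (b * d) p \<noteq> 0"
    using x y by (simp add: qeval_mult)
  show "x + y \<in> {c. kdefined c p}" "x * y \<in> {c. kdefined c p}"
    unfolding kdefined_def using sum prod bd by blast+
  show "kval (x + y) p = kval x p + kval y p"
    unfolding kval_eq[OF sum bd] kval_eq[OF x] kval_eq[OF y] qeval_mult qeval_add
    using x(2) y(2) by (simp add: add_frac_eq)
  show "kval (x * y) p = kval x p * kval y p"
    unfolding kval_eq[OF prod bd] kval_eq[OF x] kval_eq[OF y] qeval_mult by simp
qed (simp_all add: kdefined_zero)

lemma meval_eq_meval_with: "meval f x = meval_with (\<lambda>c. c) f x"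
  by (simp add: meval_def meval_with_def)

lemma lookup_spec: "Poly_Mapping.lookup (spec h p) m = kval (Poly_Mapping.lookup h m) p"
  by (simp add: spec_def Poly_Mapping.map.rep_eq when_def)

lemma meval_spec: "meval (spec h p) x = meval_with (\<lambda>c. kval c p) h x"
proof -
  have "Poly_Mapping.keys (spec h p) \<subseteq> Poly_Mapping.keys h"
    by (auto simp: in_keys_iff lookup_spec)
  then show ?thesis
    unfolding meval_eq_meval_with
    by (subst meval_with_superset[where U = "Poly_Mapping.keys h"]) (auto simp: lookup_spec meval_with_def)
qed

lemma kdefined_generic:
  assumes "finite C"
  shows "\<exists>Q. Q \<noteq> 0 \<and> (\<forall>p. qeval Q p \<noteq> 0 \<longrightarrow> (\<forall>c\<in>C. kdefined c p))"
proof -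
  have "\<exists>b. b \<noteq> 0 \<and> (\<exists>a. c = Fract a b)" for c :: kfield
    by (metis Fract_cases)
  then obtain den :: "kfield \<Rightarrow> qpoly" where den: "\<And>c. den c \<noteq> 0" "\<And>c. \<exists>a. c = Fract a (den c)"
    by metis
  show ?thesis
  proof (intro exI conjI allI impI ballI)
    show "(\<Prod>c\<in>C. den c) \<noteq> 0"
      using assms den(1) by simp
    fix p c assume "qeval (\<Prod>c\<in>C. den c) p \<noteq> 0" "c \<in> C"
    then have "qeval (den c) p \<noteq> 0"
      using assms by (simp add: qeval_prod)
    then show "kdefined c p"
      using den(2)[of c] unfolding kdefined_def by blast
  qed
qed

lemma kval_nonzero_generic:
  assumes "c \<noteq> 0"
  shows "\<exists>Q. Q \<noteq> 0 \<and> (\<forall>p. qeval Q p \<noteq> 0 \<longrightarrow> kdefined c p \<and> kval c p \<noteq> 0)"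
proof -
  obtain a b where c: "c = Fract a b" and "b \<noteq> 0"
    by (rule Fract_cases)
  moreover have "a \<noteq> 0"
    using assms c by (auto simp: fract_collapse)
  ultimately show ?thesis
    by (intro exI[of _ "a * b"]) (auto simp: qeval_mult kdefined_def kval_eq)
qed

lemma qeval_tendsto:
  assumes "\<And>i. ((\<lambda>t. P t i) \<longlongrightarrow> p i) F"
  shows "((\<lambda>t. qeval a (P t)) \<longlongrightarrow> qeval a p) F"
  unfolding qeval_def mono_eval_def by (intro tendsto_intros assms)

lemma kval_tendsto:
  assumes "kdefined c p" "\<And>i. ((\<lambda>t. P t i) \<longlongrightarrow> p i) F"
  shows "((\<lambda>t. kval c (P t)) \<longlongrightarrow> kval c p) F"
proof -
  obtain a b where c: "c = Fract a b" and b: "qeval b p \<noteq> 0"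
    using assms(1) by (auto simp: kdefined_def)
  have "((\<lambda>t. qeval a (P t) / qeval b (P t)) \<longlongrightarrow> kval c p) F"
    unfolding kval_eq[OF c b] by (intro tendsto_intros qeval_tendsto assms(2) b)
  moreover have "eventually (\<lambda>t. qeval a (P t) / qeval b (P t) = kval c (P t)) F"
    using tendsto_imp_eventually_ne[OF qeval_tendsto[OF assms(2)] b]
    by eventually_elim (simp add: kval_eq[OF c])
  ultimately show ?thesis
    by (rule Lim_transform_eventually)
qed

section \<open>Nonzero polynomials do not vanish near any point\<close>

lemma poly_nonroot_near:
  fixes q :: "complex poly"
  assumes "q \<noteq> 0" "\<delta> > 0"
  shows "\<exists>t. cmod (t - a) < \<delta> \<and> poly q t \<noteq> 0"
proof (rule ccontr)
  assume "\<not> ?thesis"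
  then have "ball a \<delta> \<subseteq> {t. poly q t = 0}"
    by (auto simp: dist_norm norm_minus_commute)
  then have "finite (ball a \<delta>)"
    using poly_roots_finite[OF assms(1)] finite_subset by blast
  then show False
    using assms(2) finite_imp_not_open[of "ball a \<delta>"] by simp
qed

lemma sum_monomials_upd_as_poly:
  assumes "finite J"
  shows "(\<Sum>j\<in>J. c j * mono_eval (\<mu> j) (x(v := t))) =
    poly (\<Sum>e\<in>(\<lambda>j. Poly_Mapping.lookup (\<mu> j) v) ` J.
      monom (\<Sum>j\<in>{j\<in>J. Poly_Mapping.lookup (\<mu> j) v = e}. c j * mono_eval (Poly_Mapping.update v 0 (\<mu> j)) x) e) t"
proof -
  have "(\<Sum>j\<in>J. c j * mono_eval (\<mu> j) (x(v := t))) =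
      (\<Sum>e\<in>(\<lambda>j. Poly_Mapping.lookup (\<mu> j) v) ` J. \<Sum>j\<in>{j\<in>J. Poly_Mapping.lookup (\<mu> j) v = e}.
         c j * mono_eval (\<mu> j) (x(v := t)))"
    using assms by (rule sum.image_gen)
  also have "\<dots> = (\<Sum>e\<in>(\<lambda>j. Poly_Mapping.lookup (\<mu> j) v) ` J. t ^ e *
       (\<Sum>j\<in>{j\<in>J. Poly_Mapping.lookup (\<mu> j) v = e}. c j * mono_eval (Poly_Mapping.update v 0 (\<mu> j)) x))"
    unfolding sum_distrib_left
    by (intro sum.cong refl)
       (simp add: mono_eval_split_var[of "\<mu> _" "x(v := t)" v] mono_eval_upd_indep keys_update)
  finally show ?thesis
    by (simp add: poly_sum poly_monom mult.commute)
qed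

lemma inj_on_update_var:
  fixes \<mu> :: "'j \<Rightarrow> (nat \<Rightarrow>\<^sub>0 nat)"
  assumes "inj_on \<mu> J"
  shows "inj_on (\<lambda>j. Poly_Mapping.update v 0 (\<mu> j)) {j\<in>J. Poly_Mapping.lookup (\<mu> j) v = e}"
proof (rule inj_onI)
  fix j j' assume "j \<in> {j\<in>J. Poly_Mapping.lookup (\<mu> j) v = e}" "j' \<in> {j\<in>J. Poly_Mapping.lookup (\<mu> j) v = e}"
    and "Poly_Mapping.update v 0 (\<mu> j) = Poly_Mapping.update v 0 (\<mu> j')"
  then have "\<mu> j = \<mu> j'" "j \<in> J" "j' \<in> J"
    using monomial_split_var[of "\<mu> j" v] monomial_split_var[of "\<mu> j'" v] by simp_all
  then show "j = j'"
    by (rule inj_onD[OF assms])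
qed

text \<open>The polynomial is a family indexed by an injective \<open>\<mu>\<close>, so that the induction hypothesis
  applies to the coefficient of each power of the last variable without reindexing.\<close>

lemma polynomial_function_nonzero_near_aux:
  fixes c :: "'j \<Rightarrow> complex" and a :: "nat \<Rightarrow> complex"
  assumes "finite J" "inj_on \<mu> J" "\<forall>j\<in>J. Poly_Mapping.keys (\<mu> j) \<subseteq> {..<M}"
    and "j0 \<in> J" "c j0 \<noteq> 0" "\<delta> > 0"
  shows "\<exists>x. (\<forall>i. cmod (x i - a i) < \<delta>) \<and> (\<Sum>j\<in>J. c j * mono_eval (\<mu> j) x) \<noteq> 0"
  using assms(1-5)
proof (induction M arbitrary: J \<mu> j0)
  case 0
  have zero: "\<mu> j = 0" if "j \<in> J" for j
    using 0(3) that by auto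
  have "j = j0" if "j \<in> J" for j
    by (rule inj_onD[OF 0(2)]) (simp_all add: zero that 0(4))
  then have "J = {j0}"
    using 0(4) by blast
  then show ?case
    using zero[OF 0(4)] 0(5) assms(6) by (intro exI[of _ a]) simp
next
  case (Suc M)
  define e where "e j = Poly_Mapping.lookup (\<mu> j) M" for j
  define \<mu>' where "\<mu>' j = Poly_Mapping.update M 0 (\<mu> j)" for j
  have "\<exists>x'. (\<forall>i. cmod (x' i - a i) < \<delta>) \<and> (\<Sum>j\<in>{j\<in>J. e j = e j0}. c j * mono_eval (\<mu>' j) x') \<noteq> 0"
  proof (rule Suc.IH)
    show "inj_on \<mu>' {j\<in>J. e j = e j0}"
      unfolding \<mu>'_def e_def by (rule inj_on_update_var[OF Suc.prems(2)])
    show "\<forall>j\<in>{j\<in>J. e j = e j0}. Poly_Mapping.keys (\<mu>' j) \<subseteq> {..<M}"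
      using Suc.prems(3) by (fastforce simp: \<mu>'_def keys_update less_Suc_eq)
  qed (use Suc.prems in auto)
  then obtain x' where x': "\<forall>i. cmod (x' i - a i) < \<delta>"
    and nonzero: "(\<Sum>j\<in>{j\<in>J. e j = e j0}. c j * mono_eval (\<mu>' j) x') \<noteq> 0"
    by blast
  define q where "q = (\<Sum>e0\<in>e ` J. monom (\<Sum>j\<in>{j\<in>J. e j = e0}. c j * mono_eval (\<mu>' j) x') e0)"
  have "coeff q (e j0) = (\<Sum>j\<in>{j\<in>J. e j = e j0}. c j * mono_eval (\<mu>' j) x')"
    unfolding q_def coeff_sum coeff_monom sum.delta[OF finite_imageI[OF Suc.prems(1)]]
    using Suc.prems(4) by simp
  then have "q \<noteq> 0"
    using nonzero by auto
  then obtain t where t: "cmod (t - a M) < \<delta>" "poly q t \<noteq> 0"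
    using poly_nonroot_near assms(6) by blast
  moreover have "(\<Sum>j\<in>J. c j * mono_eval (\<mu> j) (x'(M := t))) = poly q t"
    unfolding q_def e_def \<mu>'_def by (rule sum_monomials_upd_as_poly[OF Suc.prems(1)])
  moreover have "\<forall>i. cmod ((x'(M := t)) i - a i) < \<delta>"
    using x' t(1) by simp
  ultimately show ?case
    by metis
qed

lemma qeval_nonzero_near:
  fixes Q :: qpoly
  assumes "Q \<noteq> 0" "\<delta> > 0"
  shows "\<exists>p. (\<forall>i. cmod (p i - a i) < \<delta>) \<and> qeval Q p \<noteq> 0"
proof -
  have "finite (\<Union>m\<in>Poly_Mapping.keys Q. Poly_Mapping.keys m)"
    by simp
  then obtain M where "(\<Union>m\<in>Poly_Mapping.keys Q. Poly_Mapping.keys m) \<subseteq> {..<M}"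
    using finite_nat_bounded by blast
  then have M: "\<forall>m\<in>Poly_Mapping.keys Q. Poly_Mapping.keys m \<subseteq> {..<M}"
    by blast
  obtain m0 where m0: "m0 \<in> Poly_Mapping.keys Q"
    using assms(1) by (metis all_not_in_conv keys_eq_empty)
  then have "of_rat (Poly_Mapping.lookup Q m0) \<noteq> (0::complex)"
    by (simp add: in_keys_iff)
  then show ?thesis
    unfolding qeval_def
    by (intro polynomial_function_nonzero_near_aux[where \<mu> = "\<lambda>m. m"]) (use M m0 assms(2) in auto)
qed

section \<open>Caratheodory slopes\<close>

definition near :: "nat \<Rightarrow> real \<Rightarrow> (nat \<Rightarrow> complex) \<Rightarrow> (nat \<Rightarrow> complex) \<Rightarrow> bool" where
  "near P \<delta> x a \<longleftrightarrow> (\<forall>i<P. cmod (x i - a i) < \<delta>)"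

type_synonym point3 = "(nat \<Rightarrow> complex) \<times> (nat \<Rightarrow> complex) \<times> (nat \<Rightarrow> complex)"

definition near3 :: "nat \<Rightarrow> real \<Rightarrow> point3 \<Rightarrow> point3 \<Rightarrow> bool" where
  "near3 P \<delta> x y \<longleftrightarrow>
     near P \<delta> (fst x) (fst y) \<and> near P \<delta> (fst (snd x)) (fst (snd y)) \<and> near P \<delta> (snd (snd x)) (snd (snd y))"

text \<open>The neighbourhood filter of \<open>x0\<close> in the product topology, through its basis \<open>near3 P \<delta>\<close>.\<close>

definition near_filter :: "point3 \<Rightarrow> point3 filter" where
  "near_filter x0 = (INF z\<in>UNIV \<times> {0<..}. principal {x. near3 (fst z) (snd z) x x0})"

lemma near_mono: "near P \<delta> x a \<Longrightarrow> P' \<le> P \<Longrightarrow> \<delta> \<le> \<delta>' \<Longrightarrow> near P' \<delta>' x a"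
  unfolding near_def by (meson order_less_le_trans)

lemma near_refl: "\<delta> > 0 \<Longrightarrow> near P \<delta> a a"
  by (simp add: near_def)

lemma eventually_near_filter:
  "eventually Q (near_filter x0) \<longleftrightarrow> (\<exists>P \<delta>. \<delta> > 0 \<and> (\<forall>x. near3 P \<delta> x x0 \<longrightarrow> Q x))"
  unfolding near_filter_def
proof (subst eventually_INF_base)
  fix z1 z2 :: "nat \<times> real" assume "z1 \<in> UNIV \<times> {0<..}" "z2 \<in> UNIV \<times> {0<..}"
  then show "\<exists>z\<in>UNIV \<times> {0<..}. principal {x. near3 (fst z) (snd z) x x0} \<le>
      inf (principal {x. near3 (fst z1) (snd z1) x x0}) (principal {x. near3 (fst z2) (snd z2) x x0})"
    by (intro bexI[of _ "(max (fst z1) (fst z2), min (snd z1) (snd z2))"])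
       (auto simp: near3_def intro: near_mono)
qed (force simp: eventually_principal)+

lemma tendsto_near_filter_coords:
  "((\<lambda>x. fst x i) \<longlongrightarrow> fst x0 i) (near_filter x0)"
  "((\<lambda>x. fst (snd x) i) \<longlongrightarrow> fst (snd x0) i) (near_filter x0)"
  "((\<lambda>x. snd (snd x) i) \<longlongrightarrow> snd (snd x0) i) (near_filter x0)"
  unfolding tendsto_iff eventually_near_filter
  by (auto simp: dist_norm near3_def near_def intro!: exI[of _ "Suc i"])

text \<open>Caratheodory's characterisation of differentiability in \<open>w\<close>, with slopes jointly continuous
  in the parameter \<open>p\<close>. Slopes of sums and products are obtained by algebra alone, and a slope
  between two points \<open>w\<close> and \<open>v\<close> is exactly what a contraction estimate needs.\<close>

definition carath_slopes :: "nat \<Rightarrow> (nat \<Rightarrow> complex) \<Rightarrow> (nat \<Rightarrow> complex) \<Rightarrow>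
    ((nat \<Rightarrow> complex) \<Rightarrow> (nat \<Rightarrow> complex) \<Rightarrow> complex) \<Rightarrow> (nat \<Rightarrow> point3 \<Rightarrow> complex) \<Rightarrow> bool" where
  "carath_slopes N p0 w0 F D \<longleftrightarrow>
     (\<forall>p w v. F p w - F p v = (\<Sum>c<N. D c (p, w, v) * (w c - v c))) \<and>
     (\<forall>c<N. (D c \<longlongrightarrow> D c (p0, w0, w0)) (near_filter (p0, w0, w0))) \<and>
     ((\<lambda>x. F (fst x) (fst (snd x))) \<longlongrightarrow> F p0 w0) (near_filter (p0, w0, w0)) \<and>
     ((\<lambda>x. F (fst x) (snd (snd x))) \<longlongrightarrow> F p0 w0) (near_filter (p0, w0, w0))"

definition carath_differentiable :: "nat \<Rightarrow> (nat \<Rightarrow> complex) \<Rightarrow> (nat \<Rightarrow> complex) \<Rightarrow>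
    ((nat \<Rightarrow> complex) \<Rightarrow> (nat \<Rightarrow> complex) \<Rightarrow> complex) \<Rightarrow> bool" where
  "carath_differentiable N p0 w0 F \<longleftrightarrow> (\<exists>D. carath_slopes N p0 w0 F D)"

lemma carath_slopesD:
  assumes "carath_slopes N p0 w0 F D"
  shows "F p w - F p v = (\<Sum>c<N. D c (p, w, v) * (w c - v c))"
    and "c < N \<Longrightarrow> (D c \<longlongrightarrow> D c (p0, w0, w0)) (near_filter (p0, w0, w0))"
    and "((\<lambda>x. F (fst x) (fst (snd x))) \<longlongrightarrow> F p0 w0) (near_filter (p0, w0, w0))"
    and "((\<lambda>x. F (fst x) (snd (snd x))) \<longlongrightarrow> F p0 w0) (near_filter (p0, w0, w0))"
  using assms unfolding carath_slopes_def by blast+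

lemma sum_lessThan_eq_single:
  fixes i N :: nat
  assumes "i < N" "\<And>c. c < N \<Longrightarrow> c \<noteq> i \<Longrightarrow> f c = 0"
  shows "(\<Sum>c<N. f c) = f i"
proof -
  have "(\<Sum>c<N. f c) = (\<Sum>c\<in>{i}. f c)"
    by (rule sum.mono_neutral_right) (use assms in auto)
  then show ?thesis
    by simp
qed

lemma carath_differentiable_const:
  assumes "((\<lambda>x. g (fst x)) \<longlongrightarrow> g p0) (near_filter (p0, w0, w0))"
  shows "carath_differentiable N p0 w0 (\<lambda>p w. g p)"
  unfolding carath_differentiable_def carath_slopes_def
  using assms by (intro exI[of _ "\<lambda>c x. 0"]) auto

lemma carath_differentiable_coord:
  assumes "i < N"
  shows "carath_differentiable N p0 w0 (\<lambda>p w. w i)"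
  unfolding carath_differentiable_def carath_slopes_def
proof (intro exI[of _ "\<lambda>c x. if c = i then 1 else 0"] conjI allI impI)
  fix p w v :: "nat \<Rightarrow> complex"
  show "w i - v i = (\<Sum>c<N. (if c = i then 1 else 0) * (w c - v c))"
    using assms by (subst sum_lessThan_eq_single[of i]) auto
qed (use tendsto_near_filter_coords[of _ "(p0, w0, w0)"] in auto)

lemma carath_differentiable_add:
  assumes "carath_differentiable N p0 w0 F" "carath_differentiable N p0 w0 G"
  shows "carath_differentiable N p0 w0 (\<lambda>p w. F p w + G p w)"
proof -
  obtain D E where D: "carath_slopes N p0 w0 F D" and E: "carath_slopes N p0 w0 G E"
    using assms by (auto simp: carath_differentiable_def)
  have "F p w + G p w - (F p v + G p v) = (F p w - F p v) + (G p w - G p v)" for p w v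
    by simp
  also have "\<dots> p w v = (\<Sum>c<N. (D c (p, w, v) + E c (p, w, v)) * (w c - v c))" for p w v
    by (simp add: carath_slopesD(1)[OF D] carath_slopesD(1)[OF E] distrib_right sum.distrib)
  finally show ?thesis
    unfolding carath_differentiable_def carath_slopes_def
    using carath_slopesD[OF D] carath_slopesD[OF E]
    by (intro exI[of _ "\<lambda>c x. D c x + E c x"]) (auto intro!: tendsto_intros)
qed

lemma carath_differentiable_mult:
  assumes "carath_differentiable N p0 w0 F" "carath_differentiable N p0 w0 G"
  shows "carath_differentiable N p0 w0 (\<lambda>p w. F p w * G p w)"
proof -
  obtain D E where D: "carath_slopes N p0 w0 F D" and E: "carath_slopes N p0 w0 G E"
    using assms by (auto simp: carath_differentiable_def)
  define S where "S c x = F (fst x) (fst (snd x)) * E c x + G (fst x) (snd (snd x)) * D c x" for c x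
  have "F p w * G p w - F p v * G p v = F p w * (G p w - G p v) + G p v * (F p w - F p v)" for p w v
    by (simp add: algebra_simps)
  also have "\<dots> p w v = (\<Sum>c<N. S c (p, w, v) * (w c - v c))" for p w v
    by (simp add: carath_slopesD(1)[OF D] carath_slopesD(1)[OF E] S_def
                  sum_distrib_left sum.distrib[symmetric] algebra_simps)
  moreover have "(S c \<longlongrightarrow> S c (p0, w0, w0)) (near_filter (p0, w0, w0))" if "c < N" for c
    unfolding S_def using carath_slopesD[OF D] carath_slopesD[OF E] that
    by (auto intro!: tendsto_intros)
  ultimately show ?thesis
    unfolding carath_differentiable_def carath_slopes_def
    using carath_slopesD[OF D] carath_slopesD[OF E]
    by (intro exI[of _ S]) (auto intro!: tendsto_intros)
qed

lemma carath_differentiable_sum: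
  "(\<And>j. j \<in> A \<Longrightarrow> carath_differentiable N p0 w0 (F j)) \<Longrightarrow>
    carath_differentiable N p0 w0 (\<lambda>p w. \<Sum>j\<in>A. F j p w)"
  by (induction A rule: infinite_finite_induct)
     (auto intro: carath_differentiable_add carath_differentiable_const)

lemma carath_differentiable_prod:
  "(\<And>j. j \<in> A \<Longrightarrow> carath_differentiable N p0 w0 (F j)) \<Longrightarrow>
    carath_differentiable N p0 w0 (\<lambda>p w. \<Prod>j\<in>A. F j p w)"
  by (induction A rule: infinite_finite_induct)
     (auto intro: carath_differentiable_mult carath_differentiable_const)

lemma carath_differentiable_power:
  "carath_differentiable N p0 w0 F \<Longrightarrow> carath_differentiable N p0 w0 (\<lambda>p w. F p w ^ e)"
  by (induction e) (auto intro: carath_differentiable_mult carath_differentiable_const)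

lemma carath_differentiable_diff:
  assumes "carath_differentiable N p0 w0 F" "carath_differentiable N p0 w0 G"
  shows "carath_differentiable N p0 w0 (\<lambda>p w. F p w - G p w)"
proof -
  have "carath_differentiable N p0 w0 (\<lambda>p w. F p w + (-1) * G p w)"
    by (intro carath_differentiable_add carath_differentiable_mult carath_differentiable_const assms) simp
  then show ?thesis
    by simp
qed

lemma carath_slopes_deriv:
  assumes slopes: "carath_slopes N p0 w0 F D" and "c < N"
  shows "deriv (\<lambda>t. F p0 (w0(c := t))) (w0 c) = D c (p0, w0, w0)"
proof -
  have "F p0 (w0(c := t)) - F p0 w0 = D c (p0, w0(c := t), w0) * (t - w0 c)" for t
    unfolding carath_slopesD(1)[OF slopes] using assms(2)
    by (subst sum_lessThan_eq_single[of c]) auto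
  moreover have "filterlim (\<lambda>t. (p0, w0(c := t), w0)) (near_filter (p0, w0, w0)) (at (w0 c))"
    unfolding filterlim_def le_filter_def eventually_filtermap eventually_near_filter
  proof (intro allI impI, elim exE conjE)
    fix Q P and \<delta> :: real assume "\<delta> > 0" "\<forall>x. near3 P \<delta> x (p0, w0, w0) \<longrightarrow> Q x"
    moreover have "eventually (\<lambda>t. dist t (w0 c) < \<delta>) (at (w0 c))"
      using \<open>\<delta> > 0\<close> eventually_at by blast
    ultimately show "eventually (\<lambda>t. Q (p0, w0(c := t), w0)) (at (w0 c))"
      by (elim eventually_mono) (auto simp: near3_def near_def dist_norm)
  qed
  then have "isCont (\<lambda>t. D c (p0, w0(c := t), w0)) (w0 c)"
    using carath_slopesD(2)[OF slopes assms(2)] unfolding isCont_def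
    by (auto intro: filterlim_compose)
  ultimately have "DERIV (\<lambda>t. F p0 (w0(c := t))) (w0 c) :> D c (p0, w0, w0)"
    unfolding CARAT_DERIV by (intro exI[of _ "\<lambda>t. D c (p0, w0(c := t), w0)"]) auto
  then show ?thesis
    by (rule DERIV_imp_deriv)
qed

section \<open>Solving near a nonsingular zero\<close>

definition norm1 :: "nat \<Rightarrow> (nat \<Rightarrow> complex) \<Rightarrow> real" where
  "norm1 N u = (\<Sum>i<N. cmod (u i))"

lemma norm1_nonneg: "norm1 N u \<ge> 0"
  by (simp add: norm1_def sum_nonneg)

lemma norm1_coord: "i < N \<Longrightarrow> cmod (u i) \<le> norm1 N u"
  unfolding norm1_def by (rule member_le_sum) auto

lemma norm1_triangle: "norm1 N (\<lambda>i. a i - c i) \<le> norm1 N (\<lambda>i. a i - b i) + norm1 N (\<lambda>i. b i - c i)"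
  unfolding norm1_def sum.distrib[symmetric] by (intro sum_mono) (metis diff_add_cancel add_diff_eq norm_triangle_ineq)

lemma kernel_trivial_if_left_invertible:
  fixes L S :: "nat \<Rightarrow> nat \<Rightarrow> 'a::comm_ring_1"
  assumes inv: "\<And>a b. a < k \<Longrightarrow> b < k \<Longrightarrow> (\<Sum>c<k. L a c * S c b) = (if a = b then 1 else 0)"
    and kernel: "\<And>c. c < k \<Longrightarrow> (\<Sum>b<k. S c b * u b) = 0" and "a < k"
  shows "u a = 0"
proof -
  have "u a = (\<Sum>b<k. (if a = b then 1 else 0) * u b)"
    using \<open>a < k\<close> by (subst sum_lessThan_eq_single[of a]) auto
  also have "\<dots> = (\<Sum>b<k. (\<Sum>c<k. L a c * S c b) * u b)"
    using \<open>a < k\<close> by (intro sum.cong refl) (simp add: inv)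
  also have "\<dots> = (\<Sum>c<k. L a c * (\<Sum>b<k. S c b * u b))"
    unfolding sum_distrib_left sum_distrib_right by (subst sum.swap) (simp add: mult.assoc)
  also have "\<dots> = 0"
    by (simp add: kernel)
  finally show ?thesis .
qed

lemma contraction_iterates_converge:
  fixes \<Phi> :: "(nat \<Rightarrow> complex) \<Rightarrow> nat \<Rightarrow> complex" and N :: nat and w0 :: "nat \<Rightarrow> complex" and \<rho> :: real
  defines "K \<equiv> {w. (\<forall>i\<ge>N. w i = w0 i) \<and> norm1 N (\<lambda>i. w i - w0 i) \<le> \<rho>}"
  assumes "\<rho> \<ge> 0" and into: "\<And>w. w \<in> K \<Longrightarrow> \<Phi> w \<in> K"
    and contr: "\<And>w v. w \<in> K \<Longrightarrow> v \<in> K \<Longrightarrow> norm1 N (\<lambda>i. \<Phi> w i - \<Phi> v i) \<le> norm1 N (\<lambda>i. w i - v i) / 2"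
  shows "\<exists>wl\<in>K. \<forall>i. (\<lambda>n. (\<Phi> ^^ n) w0 i) \<longlonglongrightarrow> wl i"
proof -
  define ws where "ws j = (\<Phi> ^^ j) w0" for j
  have ws_Suc: "ws (Suc j) = \<Phi> (ws j)" for j
    by (simp add: ws_def)
  have w0K: "w0 \<in> K"
    using \<open>\<rho> \<ge> 0\<close> by (simp add: K_def norm1_def)
  have wsK: "ws j \<in> K" for j
    by (induction j) (simp_all add: ws_def w0K into)
  have step: "norm1 N (\<lambda>i. ws (Suc j) i - ws j i) \<le> (1/2)^j * \<rho>" for j
  proof (induction j)
    case 0
    show ?case
      using wsK[of 1] by (simp add: K_def ws_def)
  next
    case (Suc j)
    have "norm1 N (\<lambda>i. ws (Suc (Suc j)) i - ws (Suc j) i) \<le> norm1 N (\<lambda>i. ws (Suc j) i - ws j i) / 2"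
      using contr[OF wsK[of "Suc j"] wsK[of j]] by (simp only: ws_Suc)
    then show ?case
      using Suc by simp
  qed
  have coord: "cmod (ws (Suc j) i - ws j i) \<le> (1/2)^j * \<rho>" for j i
  proof (cases "i < N")
    case True
    show ?thesis
      by (rule order_trans[OF norm1_coord[OF True] step])
  next
    case False
    then show ?thesis
      using wsK[of j] wsK[of "Suc j"] \<open>\<rho> \<ge> 0\<close> by (simp add: K_def)
  qed
  have "summable (\<lambda>j. ws (Suc j) i - ws j i)" for i
    by (rule summable_comparison_test'[where N = 0, OF summable_mult2[OF summable_geometric]])
       (use coord in auto)
  then have "(\<lambda>n. w0 i + (\<Sum>j<n. ws (Suc j) i - ws j i)) \<longlonglongrightarrow> w0 i + suminf (\<lambda>j. ws (Suc j) i - ws j i)" for i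
    by (intro tendsto_intros summable_LIMSEQ)
  moreover have "w0 i + (\<Sum>j<n. ws (Suc j) i - ws j i) = ws n i" for i n
    using sum_lessThan_telescope[of "\<lambda>j. ws j i" n] by (simp add: ws_def)
  ultimately obtain wl where lim: "\<And>i. (\<lambda>n. ws n i) \<longlonglongrightarrow> wl i"
    by force
  have wlK: "wl \<in> K"
    unfolding K_def
  proof (intro CollectI conjI allI impI)
    fix i assume "N \<le> i"
    then have "(\<lambda>n. ws n i) \<longlonglongrightarrow> w0 i"
      using wsK by (simp add: K_def)
    then show "wl i = w0 i"
      using lim LIMSEQ_unique by blast
  next
    have "(\<lambda>n. norm1 N (\<lambda>i. ws n i - w0 i)) \<longlonglongrightarrow> norm1 N (\<lambda>i. wl i - w0 i)"
      unfolding norm1_def by (intro tendsto_intros lim)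
    then show "norm1 N (\<lambda>i. wl i - w0 i) \<le> \<rho>"
      using wsK by (intro LIMSEQ_le_const2) (auto simp: K_def)
  qed
  then show ?thesis
    using lim unfolding ws_def by blast
qed

lemma contraction_fixpoint:
  fixes \<Phi> :: "(nat \<Rightarrow> complex) \<Rightarrow> nat \<Rightarrow> complex" and N :: nat and w0 :: "nat \<Rightarrow> complex" and \<rho> :: real
  defines "K \<equiv> {w. (\<forall>i\<ge>N. w i = w0 i) \<and> norm1 N (\<lambda>i. w i - w0 i) \<le> \<rho>}"
  assumes "\<rho> \<ge> 0" and into: "\<And>w. w \<in> K \<Longrightarrow> \<Phi> w \<in> K"
    and contr: "\<And>w v. w \<in> K \<Longrightarrow> v \<in> K \<Longrightarrow> norm1 N (\<lambda>i. \<Phi> w i - \<Phi> v i) \<le> norm1 N (\<lambda>i. w i - v i) / 2"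
  shows "\<exists>w\<in>K. \<forall>i<N. \<Phi> w i = w i"
proof -
  obtain wl where wlK: "wl \<in> K" and lim: "\<And>i. (\<lambda>n. (\<Phi> ^^ n) w0 i) \<longlonglongrightarrow> wl i"
    using contraction_iterates_converge[OF \<open>\<rho> \<ge> 0\<close> into[unfolded K_def] contr[unfolded K_def], folded K_def]
    by blast
  have w0K: "w0 \<in> K"
    using \<open>\<rho> \<ge> 0\<close> by (simp add: K_def norm1_def)
  have wsK: "(\<Phi> ^^ n) w0 \<in> K" for n
    by (induction n) (simp_all add: w0K into)
  have "\<Phi> wl i = wl i" if i: "i < N" for i
  proof -
    have "(\<lambda>n. norm1 N (\<lambda>i. (\<Phi> ^^ n) w0 i - wl i) / 2) \<longlonglongrightarrow> norm1 N (\<lambda>i. wl i - wl i) / 2"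
      unfolding norm1_def by (intro tendsto_intros lim) simp
    then have to_zero: "(\<lambda>n. norm1 N (\<lambda>i. (\<Phi> ^^ n) w0 i - wl i) / 2) \<longlonglongrightarrow> 0"
      by (simp add: norm1_def)
    have bound: "cmod (\<Phi> ((\<Phi> ^^ n) w0) i - \<Phi> wl i) \<le> norm1 N (\<lambda>i. (\<Phi> ^^ n) w0 i - wl i) / 2" for n
      by (rule order_trans[OF norm1_coord[OF i] contr[OF wsK wlK]])
    have "(\<lambda>n. \<Phi> ((\<Phi> ^^ n) w0) i - \<Phi> wl i) \<longlonglongrightarrow> 0"
      by (rule Lim_null_comparison[OF always_eventually[OF allI[OF bound]] to_zero])
    then have "(\<lambda>n. \<Phi> ((\<Phi> ^^ n) w0) i) \<longlonglongrightarrow> \<Phi> wl i"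
      by (simp only: LIM_zero_iff)
    moreover have "(\<lambda>n. \<Phi> ((\<Phi> ^^ n) w0) i) \<longlonglongrightarrow> wl i"
      using LIMSEQ_Suc[OF lim[of i]] by simp
    ultimately show ?thesis
      by (rule LIMSEQ_unique)
  qed
  then show ?thesis
    using wlK by blast
qed

lemma norm1_linear_le:
  assumes "\<And>i c. i < N \<Longrightarrow> c < N \<Longrightarrow> cmod (M i c) \<le> \<beta>"
  shows "norm1 N (\<lambda>i. \<Sum>c<N. M i c * u c) \<le> real N * \<beta> * norm1 N u"
proof -
  have "cmod (\<Sum>c<N. M i c * u c) \<le> \<beta> * norm1 N u" if "i < N" for i
  proof -
    have "cmod (\<Sum>c<N. M i c * u c) \<le> (\<Sum>c<N. \<beta> * cmod (u c))"
      using assms[OF that]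
      by (intro order_trans[OF norm_sum] sum_mono) (simp add: norm_mult mult_right_mono)
    then show ?thesis
      by (simp add: norm1_def sum_distrib_left)
  qed
  then show ?thesis
    unfolding norm1_def[of N "\<lambda>i. \<Sum>c<N. M i c * u c"]
    using sum_mono[of "{..<N}" "\<lambda>i. cmod (\<Sum>c<N. M i c * u c)" "\<lambda>i. \<beta> * norm1 N u"] by simp
qed

lemma quasi_newton_step_diff:
  fixes F :: "nat \<Rightarrow> (nat \<Rightarrow> complex) \<Rightarrow> complex"
  assumes slopes: "\<And>r. r < N \<Longrightarrow> F r w - F r v = (\<Sum>c<N. S r c * (w c - v c))" and "i < N"
  shows "(w i - (\<Sum>r<N. A i r * F r w)) - (v i - (\<Sum>r<N. A i r * F r v)) =
    (\<Sum>c<N. ((if i = c then 1 else 0) - (\<Sum>r<N. A i r * S r c)) * (w c - v c))"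
proof -
  have "(w i - (\<Sum>r<N. A i r * F r w)) - (v i - (\<Sum>r<N. A i r * F r v)) =
      (w i - v i) - (\<Sum>r<N. A i r * (F r w - F r v))"
    by (simp add: sum_subtractf right_diff_distrib)
  also have "\<dots> = (w i - v i) - (\<Sum>r<N. A i r * (\<Sum>c<N. S r c * (w c - v c)))"
    by (simp add: slopes)
  also have "(\<Sum>r<N. A i r * (\<Sum>c<N. S r c * (w c - v c))) = (\<Sum>c<N. (\<Sum>r<N. A i r * S r c) * (w c - v c))"
    unfolding sum_distrib_left sum_distrib_right by (subst sum.swap) (simp add: mult.assoc)
  also have "w i - v i = (\<Sum>c<N. (if i = c then 1 else 0) * (w c - v c))"
    using \<open>i < N\<close> by (subst sum_lessThan_eq_single[of i]) auto
  finally show ?thesis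
    by (simp add: sum_subtractf left_diff_distrib)
qed

text \<open>The simplified Newton map \<open>w \<mapsto> w - A F(w)\<close>, with \<open>A\<close> a fixed approximate inverse of the
  Jacobian, is a contraction of the ball \<open>K\<close> into itself; its fixed point is a zero of \<open>F\<close>.\<close>

lemma quasi_newton_zero:
  fixes F :: "nat \<Rightarrow> (nat \<Rightarrow> complex) \<Rightarrow> complex"
    and S :: "nat \<Rightarrow> nat \<Rightarrow> (nat \<Rightarrow> complex) \<Rightarrow> (nat \<Rightarrow> complex) \<Rightarrow> complex"
    and N :: nat and w0 :: "nat \<Rightarrow> complex" and \<rho> \<beta> \<gamma> :: real
  defines "K \<equiv> {w. (\<forall>i\<ge>N. w i = w0 i) \<and> norm1 N (\<lambda>i. w i - w0 i) \<le> \<rho>}"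
  assumes slopes: "\<And>r w v. r < N \<Longrightarrow> F r w - F r v = (\<Sum>c<N. S r c w v * (w c - v c))"
    and right_inv: "\<And>r j. r < N \<Longrightarrow> j < N \<Longrightarrow> (\<Sum>i<N. J r i * A i j) = (if r = j then 1 else 0)"
    and contracting: "\<And>w v i c. w \<in> K \<Longrightarrow> v \<in> K \<Longrightarrow> i < N \<Longrightarrow> c < N \<Longrightarrow>
       cmod ((if i = c then 1 else 0) - (\<Sum>r<N. A i r * S r c w v)) \<le> \<beta>"
    and "real N * \<beta> \<le> 1 / 2"
    and start: "\<And>i. i < N \<Longrightarrow> cmod (\<Sum>r<N. A i r * F r w0) \<le> \<gamma>"
    and "real N * \<gamma> \<le> \<rho> / 2" and "\<rho> \<ge> 0"
  shows "\<exists>w. \<forall>r<N. F r w = 0"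
proof -
  define \<Phi> where "\<Phi> w i = (if i < N then w i - (\<Sum>r<N. A i r * F r w) else w0 i)" for w i
  have contr: "norm1 N (\<lambda>i. \<Phi> w i - \<Phi> v i) \<le> norm1 N (\<lambda>i. w i - v i) / 2" if "w \<in> K" "v \<in> K" for w v
  proof -
    have "norm1 N (\<lambda>i. \<Phi> w i - \<Phi> v i) =
        norm1 N (\<lambda>i. \<Sum>c<N. ((if i = c then 1 else 0) - (\<Sum>r<N. A i r * S r c w v)) * (w c - v c))"
      unfolding norm1_def \<Phi>_def
      by (intro sum.cong refl) (simp add: quasi_newton_step_diff[where S = "\<lambda>r c. S r c w v"] slopes)
    also have "\<dots> \<le> real N * \<beta> * norm1 N (\<lambda>i. w i - v i)"
      using contracting[OF that] by (rule norm1_linear_le)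
    also have "\<dots> \<le> norm1 N (\<lambda>i. w i - v i) / 2"
      using mult_right_mono[OF \<open>real N * \<beta> \<le> 1 / 2\<close> norm1_nonneg] by simp
    finally show ?thesis .
  qed
  have w0K: "w0 \<in> K"
    using \<open>\<rho> \<ge> 0\<close> by (simp add: K_def norm1_def)
  have "norm1 N (\<lambda>i. \<Phi> w0 i - w0 i) \<le> real N * \<gamma>"
    unfolding norm1_def using sum_mono[of "{..<N}" _ "\<lambda>_. \<gamma>"] start by (simp add: \<Phi>_def)
  then have "\<Phi> w \<in> K" if "w \<in> K" for w
    using norm1_triangle[of N "\<Phi> w" w0 "\<Phi> w0"] contr[OF that w0K] that \<open>real N * \<gamma> \<le> \<rho> / 2\<close>
    by (simp add: K_def \<Phi>_def)
  then obtain w where "w \<in> K" "\<And>i. i < N \<Longrightarrow> \<Phi> w i = w i"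
    using contraction_fixpoint[of \<rho> N w0 \<Phi>] \<open>\<rho> \<ge> 0\<close> contr unfolding K_def by blast
  then have "(\<Sum>j<N. A i j * F j w) = 0" if "i < N" for i
    using that by (simp add: \<Phi>_def)
  then show ?thesis
    using kernel_trivial_if_left_invertible[OF right_inv] by metis
qed

lemma near_if_norm1_less:
  assumes "\<forall>i\<ge>N. w i = w0 i" "norm1 N (\<lambda>i. w i - w0 i) < \<delta>" "\<delta> > 0"
  shows "near P \<delta> w w0"
  unfolding near_def
proof (intro allI impI)
  fix i
  show "cmod (w i - w0 i) < \<delta>"
  proof (cases "i < N")
    case True
    then show ?thesis
      using norm1_coord[OF True, of "\<lambda>i. w i - w0 i"] assms(2) by linarith
  qed (use assms in auto)
qed

lemma near3_if_norm1_ball: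
  assumes "w \<in> {w. (\<forall>i\<ge>N. w i = w0 i) \<and> norm1 N (\<lambda>i. w i - w0 i) \<le> \<delta> / 2}"
    and "v \<in> {w. (\<forall>i\<ge>N. w i = w0 i) \<and> norm1 N (\<lambda>i. w i - w0 i) \<le> \<delta> / 2}"
    and "near P \<delta> p p0" "\<delta> > 0"
  shows "near3 P \<delta> (p, w, v) (p0, w0, w0)"
  using assms by (auto simp: near3_def intro!: near_if_norm1_less)

lemma near_filter_all_small:
  fixes f :: "'i \<Rightarrow> point3 \<Rightarrow> complex"
  assumes "finite I" "\<epsilon> > 0" "\<And>i. i \<in> I \<Longrightarrow> (f i \<longlongrightarrow> 0) (near_filter x0)"
  shows "\<exists>P \<delta>. \<delta> > 0 \<and> (\<forall>x. near3 P \<delta> x x0 \<longrightarrow> (\<forall>i\<in>I. cmod (f i x) < \<epsilon>))"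
proof -
  have "eventually (\<lambda>x. \<forall>i\<in>I. cmod (f i x) < \<epsilon>) (near_filter x0)"
    using assms by (intro eventually_ball_finite) (auto simp: tendsto_iff)
  then show ?thesis
    unfolding eventually_near_filter .
qed

lemma slopes_nearly_inverted:
  assumes slopes: "\<And>r. r < N \<Longrightarrow> carath_slopes N p0 w0 (F r) (D r)"
    and left_inv: "\<And>i c. i < N \<Longrightarrow> c < N \<Longrightarrow>
      (\<Sum>r<N. A i r * D r c (p0, w0, w0)) = (if i = c then 1 else 0)"
    and "\<beta> > 0"
  shows "\<exists>P \<delta>. \<delta> > 0 \<and> (\<forall>x i c. near3 P \<delta> x (p0, w0, w0) \<longrightarrow> i < N \<longrightarrow> c < N \<longrightarrow>
    cmod ((if i = c then 1 else 0) - (\<Sum>r<N. A i r * D r c x)) < \<beta>)"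
proof -
  define B where "B ic x = (if fst ic = snd ic then 1 else 0) - (\<Sum>r<N. A (fst ic) r * D r (snd ic) x)"
    for ic x
  have lim: "(B ic \<longlongrightarrow> 0) (near_filter (p0, w0, w0))" if "ic \<in> {..<N} \<times> {..<N}" for ic
  proof -
    have "(B ic \<longlongrightarrow> (if fst ic = snd ic then 1 else 0) - (\<Sum>r<N. A (fst ic) r * D r (snd ic) (p0, w0, w0)))
        (near_filter (p0, w0, w0))"
      unfolding B_def using carath_slopesD(2)[OF slopes] that by (auto intro!: tendsto_intros)
    then show ?thesis
      using left_inv that by (auto simp: mem_Times_iff)
  qed
  have "\<exists>P \<delta>. \<delta> > 0 \<and> (\<forall>x. near3 P \<delta> x (p0, w0, w0) \<longrightarrow> (\<forall>ic\<in>{..<N} \<times> {..<N}. cmod (B ic x) < \<beta>))"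
    by (rule near_filter_all_small) (use lim \<open>\<beta> > 0\<close> in auto)
  then show ?thesis
  proof (elim exE conjE)
    fix P \<delta> assume "\<delta> > 0"
      and small: "\<forall>x. near3 P \<delta> x (p0, w0, w0) \<longrightarrow> (\<forall>ic\<in>{..<N} \<times> {..<N}. cmod (B ic x) < \<beta>)"
    show ?thesis
    proof (intro exI[of _ P] exI[of _ \<delta>] conjI allI impI)
      fix x i c assume "near3 P \<delta> x (p0, w0, w0)" "i < N" "c < N"
      then show "cmod ((if i = c then 1 else 0) - (\<Sum>r<N. A i r * D r c x)) < \<beta>"
        using small[rule_format, of x "(i, c)"] by (simp add: B_def)
    qed fact
  qed
qed

lemma residual_small_near:
  assumes slopes: "\<And>r. r < N \<Longrightarrow> carath_slopes N p0 w0 (F r) (D r)"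
    and zero: "\<And>r. r < N \<Longrightarrow> F r p0 w0 = 0" and "\<gamma> > 0"
  shows "\<exists>P \<delta>. \<delta> > 0 \<and> (\<forall>p i. near P \<delta> p p0 \<longrightarrow> i < N \<longrightarrow> cmod (\<Sum>r<N. A i r * F r p w0) < \<gamma>)"
proof -
  define G where "G i x = (\<Sum>r<N. A i r * F r (fst x) (fst (snd x)))" for i and x :: point3
  have "(G i \<longlongrightarrow> 0) (near_filter (p0, w0, w0))" for i
  proof -
    have "(G i \<longlongrightarrow> (\<Sum>r<N. A i r * F r p0 w0)) (near_filter (p0, w0, w0))"
      unfolding G_def using carath_slopesD(3)[OF slopes] by (auto intro!: tendsto_intros)
    then show ?thesis
      by (simp add: zero)
  qed
  from near_filter_all_small[where I = "{..<N}" and f = G, OF finite_lessThan \<open>\<gamma> > 0\<close> this]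
  show ?thesis
  proof (elim exE conjE)
    fix P \<delta> assume "\<delta> > 0"
      and small: "\<forall>x. near3 P \<delta> x (p0, w0, w0) \<longrightarrow> (\<forall>i\<in>{..<N}. cmod (G i x) < \<gamma>)"
    show ?thesis
    proof (intro exI[of _ P] exI[of _ \<delta>] conjI allI impI)
      fix p i assume "near P \<delta> p p0" "i < N"
      then show "cmod (\<Sum>r<N. A i r * F r p w0) < \<gamma>"
        using small[rule_format, of "(p, w0, w0)" i] \<open>\<delta> > 0\<close> by (simp add: near3_def near_refl G_def)
    qed fact
  qed
qed

lemma local_solvability:
  fixes F :: "nat \<Rightarrow> (nat \<Rightarrow> complex) \<Rightarrow> (nat \<Rightarrow> complex) \<Rightarrow> complex"
    and D :: "nat \<Rightarrow> nat \<Rightarrow> point3 \<Rightarrow> complex" and A :: "nat \<Rightarrow> nat \<Rightarrow> complex"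
  assumes slopes: "\<And>r. r < N \<Longrightarrow> carath_slopes N p0 w0 (F r) (D r)"
    and zero: "\<And>r. r < N \<Longrightarrow> F r p0 w0 = 0"
    and left_inv: "\<And>i c. i < N \<Longrightarrow> c < N \<Longrightarrow>
      (\<Sum>r<N. A i r * D r c (p0, w0, w0)) = (if i = c then 1 else 0)"
    and right_inv: "\<And>r j. r < N \<Longrightarrow> j < N \<Longrightarrow>
      (\<Sum>i<N. D r i (p0, w0, w0) * A i j) = (if r = j then 1 else 0)"
  shows "\<exists>P \<delta>. \<delta> > 0 \<and> (\<forall>p. near P \<delta> p p0 \<longrightarrow> (\<exists>w. \<forall>r<N. F r p w = 0))"
proof -
  define \<beta> :: real where "\<beta> = 1 / (2 * N + 1)"
  have "\<beta> > 0"
    by (simp add: \<beta>_def)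
  have "\<exists>P \<delta>. \<delta> > 0 \<and> (\<forall>x i c. near3 P \<delta> x (p0, w0, w0) \<longrightarrow> i < N \<longrightarrow> c < N \<longrightarrow>
      cmod ((if i = c then 1 else 0) - (\<Sum>r<N. A i r * D r c x)) < \<beta>)"
    by (rule slopes_nearly_inverted[where F = F and D = D and A = A])
       (use slopes left_inv \<open>\<beta> > 0\<close> in auto)
  then obtain P1 \<delta>1 where "\<delta>1 > 0" and P1: "\<forall>x i c. near3 P1 \<delta>1 x (p0, w0, w0) \<longrightarrow> i < N \<longrightarrow> c < N \<longrightarrow>
      cmod ((if i = c then 1 else 0) - (\<Sum>r<N. A i r * D r c x)) < \<beta>"
    by (elim exE conjE) (rule that)
  define \<rho> where "\<rho> = \<delta>1 / 2"
  define \<gamma> :: real where "\<gamma> = \<rho> / (2 * N + 2)"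
  have "\<gamma> > 0"
    using \<open>\<delta>1 > 0\<close> by (simp add: \<gamma>_def \<rho>_def)
  have "\<exists>P \<delta>. \<delta> > 0 \<and> (\<forall>p i. near P \<delta> p p0 \<longrightarrow> i < N \<longrightarrow> cmod (\<Sum>r<N. A i r * F r p w0) < \<gamma>)"
    by (rule residual_small_near[where F = F and D = D and A = A])
       (use slopes zero \<open>\<gamma> > 0\<close> in auto)
  then obtain P2 \<delta>2 where "\<delta>2 > 0"
    and P2: "\<forall>p i. near P2 \<delta>2 p p0 \<longrightarrow> i < N \<longrightarrow> cmod (\<Sum>r<N. A i r * F r p w0) < \<gamma>"
    by (elim exE conjE) (rule that)
  show ?thesis
  proof (intro exI[of _ "max P1 P2"] exI[of _ "min \<delta>1 \<delta>2"] conjI allI impI)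
    show "min \<delta>1 \<delta>2 > 0"
      using \<open>\<delta>1 > 0\<close> \<open>\<delta>2 > 0\<close> by simp
    fix p assume "near (max P1 P2) (min \<delta>1 \<delta>2) p p0"
    then have p: "near P1 \<delta>1 p p0" "near P2 \<delta>2 p p0"
      by (rule near_mono; simp)+
    have contracting: "cmod ((if i = c then 1 else 0) - (\<Sum>r<N. A i r * D r c (p, w, v))) \<le> \<beta>"
      if "w \<in> {w. (\<forall>i\<ge>N. w i = w0 i) \<and> norm1 N (\<lambda>i. w i - w0 i) \<le> \<rho>}"
        and "v \<in> {w. (\<forall>i\<ge>N. w i = w0 i) \<and> norm1 N (\<lambda>i. w i - w0 i) \<le> \<rho>}" and "i < N" "c < N"
      for w v i c
    proof -
      have "near3 P1 \<delta>1 (p, w, v) (p0, w0, w0)"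
        using that(1,2) p(1) \<open>\<delta>1 > 0\<close> unfolding \<rho>_def by (rule near3_if_norm1_ball)
      from less_imp_le[OF P1[rule_format, OF this that(3,4)]]
      show ?thesis .
    qed
    have slopes_p: "F r p w - F r p v = (\<Sum>c<N. D r c (p, w, v) * (w c - v c))" if "r < N" for r w v
      by (rule carath_slopesD(1)[OF slopes[OF that]])
    have start: "cmod (\<Sum>r<N. A i r * F r p w0) \<le> \<gamma>" if "i < N" for i
      using less_imp_le[OF P2[rule_format, OF p(2) that]] .
    show "\<exists>w. \<forall>r<N. F r p w = 0"
      by (rule quasi_newton_zero[where \<rho> = \<rho> and \<beta> = \<beta> and \<gamma> = \<gamma>,
            OF slopes_p right_inv contracting _ start])
         (use \<open>\<delta>1 > 0\<close> in \<open>auto simp: \<beta>_def \<gamma>_def \<rho>_def field_simps\<close>)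
  qed
qed

section \<open>The square system\<close>

lemma carath_differentiable_mono_eval_yvec:
  assumes "Poly_Mapping.keys m \<subseteq> {..<n}" "j < k" "k * n \<le> N"
  shows "carath_differentiable N p0 w0 (\<lambda>p w. mono_eval m (yvec n w j))"
proof -
  have "j * n + i < N" if "i < n" for i
  proof -
    have "j * n + i < Suc j * n"
      using that by simp
    also have "\<dots> \<le> k * n"
      using assms(2) by (intro mult_right_mono) auto
    finally show ?thesis
      using assms(3) by simp
  qed
  then have "carath_differentiable N p0 w0
      (\<lambda>p w. \<Prod>i\<in>Poly_Mapping.keys m. w (j * n + i) ^ Poly_Mapping.lookup m i)"
    using assms(1)
    by (intro carath_differentiable_prod carath_differentiable_power carath_differentiable_coord) auto
  moreover have "(\<Prod>i\<in>Poly_Mapping.keys m. w (j * n + i) ^ Poly_Mapping.lookup m i) = mono_eval m (yvec n w j)"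
    for w
    unfolding mono_eval_def yvec_def using assms(1) by (intro prod.cong refl) auto
  ultimately show ?thesis
    by simp
qed

lemma carath_differentiable_meval_spec:
  assumes "h \<in> mpolys n" "coeffs_defined h p0" "j < k" "k * n \<le> N"
  shows "carath_differentiable N p0 w0 (\<lambda>p w. meval (spec h p) (yvec n w j))"
proof -
  have "carath_differentiable N p0 w0 (\<lambda>p w.
      \<Sum>m\<in>Poly_Mapping.keys h. kval (Poly_Mapping.lookup h m) p * mono_eval m (yvec n w j))"
  proof (intro carath_differentiable_sum carath_differentiable_mult)
    fix m assume m: "m \<in> Poly_Mapping.keys h"
    show "carath_differentiable N p0 w0 (\<lambda>p w. kval (Poly_Mapping.lookup h m) p)"
      using assms(2) m
      by (intro carath_differentiable_const kval_tendsto tendsto_near_filter_coords(1)[of _ "(p0, w0, w0)", simplified])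
         (auto simp: coeffs_defined_def)
    show "carath_differentiable N p0 w0 (\<lambda>p w. mono_eval m (yvec n w j))"
      using assms(1,3,4) m by (intro carath_differentiable_mono_eval_yvec) (auto simp: mpolys_def)
  qed
  then show ?thesis
    by (simp add: meval_spec meval_with_def)
qed

lemma carath_differentiable_inverse_row:
  assumes "a < k" "b < k" "length sel = k" "\<forall>m\<in>set sel. Poly_Mapping.keys m \<subseteq> {..<n}"
  shows "carath_differentiable (k * n + k * k) p0 w0 (\<lambda>p w.
      (\<Sum>c<k. w (k * n + a * k + c) * mono_eval (sel ! b) (yvec n w c)) - (if a = b then 1 else 0))"
proof (intro carath_differentiable_diff carath_differentiable_sum carath_differentiable_mult
    carath_differentiable_const tendsto_const)
  fix c assume c: "c \<in> {..<k}"
  have "k * n + a * k + c < k * n + (a + 1) * k"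
    using c by simp
  also have "\<dots> \<le> k * n + k * k"
    using \<open>a < k\<close> by (intro add_left_mono mult_right_mono) auto
  finally show "carath_differentiable (k * n + k * k) p0 w0 (\<lambda>p w. w (k * n + a * k + c))"
    by (rule carath_differentiable_coord)
  show "carath_differentiable (k * n + k * k) p0 w0 (\<lambda>p w. mono_eval (sel ! b) (yvec n w c))"
    using assms(3,4) \<open>b < k\<close> c by (intro carath_differentiable_mono_eval_yvec[where k = k]) auto
qed

lemma sysG_carath_differentiable:
  assumes "length hs = n" "\<forall>h\<in>set hs. h \<in> mpolys n \<and> coeffs_defined h p0"
    "length sel = k" "\<forall>m\<in>set sel. Poly_Mapping.keys m \<subseteq> {..<n}" "r < k * n + k * k"
  shows "carath_differentiable (k * n + k * k) p0 w0 (\<lambda>p w. sysG n k (map (\<lambda>h. spec h p) hs) sel r w)"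
proof (cases "r < k * n")
  case True
  have "n > 0"
    using True by (cases n) auto
  then have "r mod n < n" "r div n < k"
    using True by (simp_all add: less_mult_imp_div_less)
  then have "carath_differentiable (k * n + k * k) p0 w0 (\<lambda>p w. meval (spec (hs ! (r mod n)) p) (yvec n w (r div n)))"
    using assms(1,2) by (intro carath_differentiable_meval_spec) auto
  then show ?thesis
    using True \<open>r mod n < n\<close> assms(1) by (simp add: sysG_def)
next
  case False
  have "k > 0"
    using False assms(5) by (cases k) auto
  then have "(r - k * n) div k < k" "(r - k * n) mod k < k"
    using False assms(5) by (simp_all add: less_mult_imp_div_less)
  from carath_differentiable_inverse_row[OF this assms(3,4), of p0 w0]
  show ?thesis
    using False by (simp add: sysG_def Let_def)
qed

lemma invertible_mat_two_sided_inverse: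
  fixes f :: "nat \<times> nat \<Rightarrow> 'a::comm_ring_1"
  assumes "invertible_mat (Matrix.mat N N f)"
  obtains A where "\<And>i c. i < N \<Longrightarrow> c < N \<Longrightarrow> (\<Sum>r<N. A i r * f (r, c)) = (if i = c then 1 else 0)"
    and "\<And>r j. r < N \<Longrightarrow> j < N \<Longrightarrow> (\<Sum>i<N. f (r, i) * A i j) = (if r = j then 1 else 0)"
proof -
  obtain B where JB: "Matrix.mat N N f * B = 1\<^sub>m N" and BJ: "B * Matrix.mat N N f = 1\<^sub>m (dim_row B)"
    using assms by (auto simp: invertible_mat_def inverts_mat_def)
  have dims: "dim_col B = N" "dim_row B = N"
    using arg_cong[OF JB, of dim_col] arg_cong[OF BJ, of dim_col] by simp_all
  show ?thesis
  proof (rule that[of "\<lambda>i j. B $$ (i, j)"])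
    fix i c assume "i < N" "c < N"
    then show "(\<Sum>r<N. B $$ (i, r) * f (r, c)) = (if i = c then 1 else 0)"
      using arg_cong[OF BJ, of "\<lambda>M. M $$ (i, c)"] dims by (simp add: scalar_prod_def atLeast0LessThan)
  next
    fix r j assume "r < N" "j < N"
    then show "(\<Sum>i<N. f (r, i) * B $$ (i, j)) = (if r = j then 1 else 0)"
      using arg_cong[OF JB, of "\<lambda>M. M $$ (r, j)"] dims by (simp add: scalar_prod_def atLeast0LessThan)
  qed
qed

lemma sysG_locally_solvable:
  fixes hs :: "kfield mpoly list"
  assumes "length hs = n" "\<forall>h\<in>set hs. h \<in> mpolys n \<and> coeffs_defined h p0"
    "length sel = k" "\<forall>m\<in>set sel. Poly_Mapping.keys m \<subseteq> {..<n}"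
    and zero: "\<forall>r<k * n + k * k. sysG n k (map (\<lambda>h. spec h p0) hs) sel r z = 0"
    and nonsingular: "invertible_mat (jacobian (k * n + k * k) (sysG n k (map (\<lambda>h. spec h p0) hs) sel) z)"
  shows "\<exists>P \<delta>. \<delta> > 0 \<and> (\<forall>p. near P \<delta> p p0 \<longrightarrow>
    (\<exists>w. \<forall>r<k * n + k * k. sysG n k (map (\<lambda>h. spec h p) hs) sel r w = 0))"
proof -
  define N where "N = k * n + k * k"
  define F where "F r p w = sysG n k (map (\<lambda>h. spec h p) hs) sel r w" for r p w
  have "\<forall>r. \<exists>D. r < N \<longrightarrow> carath_slopes N p0 z (F r) D"
    using sysG_carath_differentiable[OF assms(1-4)]
    unfolding carath_differentiable_def F_def N_def by blast
  then obtain D where D: "\<And>r. r < N \<Longrightarrow> carath_slopes N p0 z (F r) (D r)"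
    by metis
  have "jacobian N (sysG n k (map (\<lambda>h. spec h p0) hs) sel) z = Matrix.mat N N (\<lambda>(r, c). D r c (p0, z, z))"
    by (rule eq_matI) (auto simp: jacobian_def carath_slopes_deriv[OF D] F_def[symmetric])
  then obtain A
    where "\<And>i c. i < N \<Longrightarrow> c < N \<Longrightarrow> (\<Sum>r<N. A i r * D r c (p0, z, z)) = (if i = c then 1 else 0)"
      and "\<And>r j. r < N \<Longrightarrow> j < N \<Longrightarrow> (\<Sum>i<N. D r i (p0, z, z) * A i j) = (if r = j then 1 else 0)"
    using invertible_mat_two_sided_inverse[of N "\<lambda>(r, c). D r c (p0, z, z)"] nonsingular
    unfolding N_def by auto
  from local_solvability[OF D _ this] zero
  show ?thesis
    unfolding F_def N_def by blast
qed

lemma sysG_zeroD: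
  assumes "\<forall>r<k * n + k * k. sysG n k gs sel r w = 0"
  shows "\<And>j i. j < k \<Longrightarrow> i < n \<Longrightarrow> meval (gs ! i) (yvec n w j) = 0"
    and "\<And>a b. a < k \<Longrightarrow> b < k \<Longrightarrow>
      (\<Sum>c<k. w (k * n + a * k + c) * mono_eval (sel ! b) (yvec n w c)) = (if a = b then 1 else 0)"
proof -
  fix j i assume "j < k" "i < n"
  have "j * n + i < Suc j * n"
    using \<open>i < n\<close> by simp
  also have "\<dots> \<le> k * n"
    using \<open>j < k\<close> by (intro mult_right_mono) auto
  finally have "j * n + i < k * n" .
  moreover have "sysG n k gs sel (j * n + i) w = 0"
    using assms calculation by simp
  ultimately show "meval (gs ! i) (yvec n w j) = 0"
    using \<open>i < n\<close> by (simp add: sysG_def)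
next
  fix a b assume "a < k" "b < k"
  have "k * n + a * k + b < k * n + Suc a * k"
    using \<open>b < k\<close> by simp
  also have "\<dots> \<le> k * n + k * k"
    using \<open>a < k\<close> by (intro add_left_mono mult_right_mono) auto
  finally have "k * n + a * k + b < k * n + k * k" .
  then have "sysG n k gs sel (k * n + a * k + b) w = 0"
    using assms by simp
  then show "(\<Sum>c<k. w (k * n + a * k + c) * mono_eval (sel ! b) (yvec n w c)) = (if a = b then 1 else 0)"
    using \<open>b < k\<close> by (simp add: sysG_def Let_def)
qed

section \<open>Counting dimensions\<close>

lemma lookup_cscale: "Poly_Mapping.lookup (cscale c f) m = c * Poly_Mapping.lookup f m"
  by (simp add: cscale_def mult_map_scale_conv_mult[symmetric] Poly_Mapping.map.rep_eq when_def)

lemma keys_cscale: "Poly_Mapping.keys (cscale c f) \<subseteq> Poly_Mapping.keys f"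
  by (auto simp: in_keys_iff lookup_cscale)

lemma vector_space_cscale: "vector_space (cscale :: 'a::field \<Rightarrow> 'a mpoly \<Rightarrow> 'a mpoly)"
  by unfold_locales (auto intro!: poly_mapping_eqI simp: lookup_cscale lookup_add algebra_simps)

definition restrict_coeffs :: "(nat \<Rightarrow>\<^sub>0 nat) set \<Rightarrow> 'a::zero mpoly \<Rightarrow> 'a mpoly" where
  "restrict_coeffs T f = Abs_poly_mapping (\<lambda>m. if m \<in> T then Poly_Mapping.lookup f m else 0)"

lemma lookup_restrict_coeffs:
  "Poly_Mapping.lookup (restrict_coeffs T f) m = (if m \<in> T then Poly_Mapping.lookup f m else 0)"
proof -
  have "finite {m. (if m \<in> T then Poly_Mapping.lookup f m else 0) \<noteq> 0}"
    by (rule finite_subset[OF _ finite_keys[of f]]) (auto simp: in_keys_iff)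
  then show ?thesis
    by (simp add: restrict_coeffs_def)
qed

lemma in_span_monomials:
  fixes g :: "'a::field mpoly"
  assumes "Poly_Mapping.keys g \<subseteq> T"
  shows "g \<in> module.span cscale ((\<lambda>m. Poly_Mapping.single m 1) ` T)"
proof -
  interpret vs: vector_space "cscale :: 'a \<Rightarrow> 'a mpoly \<Rightarrow> 'a mpoly"
    by (rule vector_space_cscale)
  have "g = (\<Sum>m\<in>Poly_Mapping.keys g. cscale (Poly_Mapping.lookup g m) (Poly_Mapping.single m 1))"
    by (simp add: cscale_def mult_single poly_mapping_sum_single)
  also have "\<dots> \<in> vs.span ((\<lambda>m. Poly_Mapping.single m 1) ` T)"
    using assms by (intro vs.span_sum vs.span_scale vs.span_base) auto
  finally show ?thesis .
qed

lemma dim_le_card_if_coeffs_determine: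
  fixes V :: "'a::field mpoly set"
  assumes sub: "module.subspace (cscale :: 'a \<Rightarrow> 'a mpoly \<Rightarrow> 'a mpoly) V"
    and determine: "\<And>f. f \<in> V \<Longrightarrow> (\<forall>m\<in>T. Poly_Mapping.lookup f m = 0) \<Longrightarrow> f = 0"
    and "finite T"
  shows "vector_space.dim (cscale :: 'a \<Rightarrow> 'a mpoly \<Rightarrow> 'a mpoly) V \<le> card T"
proof -
  interpret vs: vector_space "cscale :: 'a \<Rightarrow> 'a mpoly \<Rightarrow> 'a mpoly"
    by (rule vector_space_cscale)
  interpret restrict: module_hom cscale cscale "restrict_coeffs T :: 'a mpoly \<Rightarrow> 'a mpoly"
    by unfold_locales
       (auto intro!: poly_mapping_eqI simp: lookup_restrict_coeffs lookup_cscale lookup_add)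
  obtain B where B: "B \<subseteq> V" "vs.independent B" "V \<subseteq> vs.span B" "card B = vs.dim V"
    by (rule vs.basis_exists)
  have "inj_on (restrict_coeffs T) V"
  proof (rule inj_onI)
    fix f g assume "f \<in> V" "g \<in> V" and eq: "restrict_coeffs T f = restrict_coeffs T g"
    have "Poly_Mapping.lookup (f - g) m = 0" if "m \<in> T" for m
      using arg_cong[OF eq, of "\<lambda>h. Poly_Mapping.lookup h m"] that
      by (simp add: lookup_restrict_coeffs lookup_minus)
    moreover have "f - g \<in> V"
      using sub \<open>f \<in> V\<close> \<open>g \<in> V\<close> by (simp add: vs.subspace_diff)
    ultimately have "f - g = 0"
      using determine by blast
    then show "f = g"
      by simp
  qed
  then have inj: "inj_on (restrict_coeffs T) (vs.span B)"
    using B sub vs.span_subspace by auto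
  have "restrict_coeffs T ` B \<subseteq> vs.span ((\<lambda>m. Poly_Mapping.single m 1) ` T)"
    by (auto intro!: in_span_monomials simp: in_keys_iff lookup_restrict_coeffs split: if_splits)
  then have "card (restrict_coeffs T ` B) \<le> card ((\<lambda>m. Poly_Mapping.single m (1::'a)) ` T)"
    using vs.independent_span_bound restrict.independent_injective_image[OF B(2) inj] \<open>finite T\<close> by blast
  also have "\<dots> \<le> card T"
    using \<open>finite T\<close> by (rule card_image_le)
  finally show ?thesis
    using card_image[OF inj_on_subset[OF inj vs.span_superset]] B(4) by simp
qed

definition monomials_le :: "nat \<Rightarrow> nat \<Rightarrow> (nat \<Rightarrow>\<^sub>0 nat) set" where
  "monomials_le n d = {m. Poly_Mapping.keys m \<subseteq> {..<n} \<and> tdeg m \<le> d}"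

lemma tdeg_superset:
  assumes "finite U" "Poly_Mapping.keys m \<subseteq> U"
  shows "tdeg m = (\<Sum>i\<in>U. Poly_Mapping.lookup m i)"
  unfolding tdeg_def by (rule sum.mono_neutral_left) (use assms in \<open>auto simp: in_keys_iff\<close>)

lemma tdeg_add: "tdeg (a + b) = tdeg a + tdeg b"
proof -
  let ?U = "Poly_Mapping.keys a \<union> Poly_Mapping.keys b"
  have "tdeg (a + b) = (\<Sum>i\<in>?U. Poly_Mapping.lookup (a + b) i)"
    by (rule tdeg_superset) (auto simp: keys_add_monomials)
  also have "\<dots> = tdeg a + tdeg b"
    by (simp add: lookup_add sum.distrib tdeg_superset[where U = ?U])
  finally show ?thesis .
qed

lemma tdeg_single: "tdeg (Poly_Mapping.single v e) = e"
  by (cases "e = 0") (auto simp: tdeg_def)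

lemma monomials_le_Suc:
  "monomials_le (Suc n) d = (\<Union>e\<le>d. (\<lambda>m. m + Poly_Mapping.single n e) ` monomials_le n (d - e))"
proof (intro equalityI subsetI)
  fix m assume m: "m \<in> monomials_le (Suc n) d"
  define e where "e = Poly_Mapping.lookup m n"
  have split: "m = Poly_Mapping.update n 0 m + Poly_Mapping.single n e"
    unfolding e_def by (rule monomial_split_var)
  then have "tdeg m = tdeg (Poly_Mapping.update n 0 m) + e"
    by (metis tdeg_add tdeg_single)
  then have "e \<le> d" "Poly_Mapping.update n 0 m \<in> monomials_le n (d - e)"
    using m by (auto simp: monomials_le_def keys_update less_Suc_eq)
  then show "m \<in> (\<Union>e\<le>d. (\<lambda>m. m + Poly_Mapping.single n e) ` monomials_le n (d - e))"
    using split by blast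
next
  fix m assume "m \<in> (\<Union>e\<le>d. (\<lambda>m. m + Poly_Mapping.single n e) ` monomials_le n (d - e))"
  then obtain e m' where "e \<le> d" "m' \<in> monomials_le n (d - e)" "m = m' + Poly_Mapping.single n e"
    by blast
  then show "m \<in> monomials_le (Suc n) d"
    by (force simp: monomials_le_def keys_add_monomials tdeg_add tdeg_single split: if_splits)
qed

lemma card_monomials_le: "finite (monomials_le n d) \<and> card (monomials_le n d) = (n + d) choose d"
proof (induction n arbitrary: d)
  case 0
  have "monomials_le 0 d = {0}"
    by (auto simp: monomials_le_def tdeg_def)
  then show ?case
    by simp
next
  case (Suc n)
  define shift where "shift e m = m + Poly_Mapping.single n e" for e and m :: "nat \<Rightarrow>\<^sub>0 nat"
  have lookup_shift: "Poly_Mapping.lookup x n = e" if "x \<in> shift e ` monomials_le n d'" for x e d'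
    using that by (auto simp: shift_def lookup_add monomials_le_def in_keys_iff)
  have card_shift: "finite (shift e ` monomials_le n (d - e)) \<and>
      card (shift e ` monomials_le n (d - e)) = (n + (d - e)) choose (d - e)" for e
    using Suc.IH[of "d - e"] card_image[of "shift e"] by (simp add: shift_def inj_on_def)
  have "e = j" if "x \<in> shift e ` monomials_le n (d - e)" "x \<in> shift j ` monomials_le n (d - j)" for x e j
    using lookup_shift[OF that(1)] lookup_shift[OF that(2)] by simp
  then have "shift e ` monomials_le n (d - e) \<inter> shift j ` monomials_le n (d - j) = {}" if "e \<noteq> j" for e j
    using that by blast
  then have "card (monomials_le (Suc n) d) = (\<Sum>e\<le>d. card (shift e ` monomials_le n (d - e)))"
    unfolding monomials_le_Suc shift_def[symmetric]
    by (intro card_UN_disjoint) (use card_shift in auto)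
  also have "\<dots> = (\<Sum>e\<le>d. (n + (d - e)) choose (d - e))"
    using card_shift by simp
  also have "\<dots> = (\<Sum>j\<le>d. (n + j) choose j)"
    by (rule sum.reindex_bij_witness[of _ "\<lambda>j. d - j" "\<lambda>j. d - j"]) auto
  also have "\<dots> = (Suc n + d) choose d"
    by (simp add: sum_choose_lower)
  finally show ?case
    using card_shift by (simp add: monomials_le_Suc shift_def[symmetric])
qed

lemma card_monomials_le_Diff:
  assumes "set sel \<subseteq> monomials_le n d" "distinct sel"
  shows "card (monomials_le n d - set sel) + length sel = (n + d) choose d"
proof -
  have "finite (monomials_le n d)" "card (set sel) = length sel"
    using card_monomials_le distinct_card[OF assms(2)] by auto
  then show ?thesis
    using card_mono[OF _ assms(1)] card_monomials_le[of n d] assms(1) by (simp add: card_Diff_subset)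
qed

lemma mpolys_zero: "0 \<in> mpolys n"
  by (simp add: mpolys_def)

lemma mpolys_add: "f \<in> mpolys n \<Longrightarrow> g \<in> mpolys n \<Longrightarrow> f + g \<in> mpolys n"
  using keys_add[of f g] by (auto simp: mpolys_def)

lemma mpolys_mult: "f \<in> mpolys n \<Longrightarrow> g \<in> mpolys n \<Longrightarrow> f * g \<in> mpolys n"
  using keys_mult[of f g] by (fastforce simp: mpolys_def keys_add_monomials)

lemma mpolys_cscale: "f \<in> mpolys n \<Longrightarrow> cscale c f \<in> mpolys n"
  using keys_cscale[of c f] by (auto simp: mpolys_def)

lemma mpolys_sum: "(\<And>i. i \<in> A \<Longrightarrow> F i \<in> mpolys n) \<Longrightarrow> (\<Sum>i\<in>A. F i) \<in> mpolys n"
  by (induction A rule: infinite_finite_induct) (auto intro: mpolys_add mpolys_zero)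

lemma ideal_gen_subset_mpolys: "\<forall>h\<in>set hs. h \<in> mpolys n \<Longrightarrow> ideal_gen n hs \<subseteq> mpolys n"
  by (auto simp: ideal_gen_def intro!: mpolys_sum mpolys_mult)

lemma ideal_gen_zero: "0 \<in> ideal_gen n hs"
  unfolding ideal_gen_def by (auto intro!: exI[of _ "\<lambda>i. 0"] mpolys_zero)

lemma ideal_gen_add:
  assumes "f \<in> ideal_gen n hs" "g \<in> ideal_gen n hs"
  shows "f + g \<in> ideal_gen n hs"
proof -
  obtain a b where "f = (\<Sum>i<length hs. a i * hs ! i)" "g = (\<Sum>i<length hs. b i * hs ! i)"
    and "\<forall>i<length hs. a i \<in> mpolys n \<and> b i \<in> mpolys n"
    using assms by (auto simp: ideal_gen_def)
  then show ?thesis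
    unfolding ideal_gen_def
    by (intro CollectI exI[of _ "\<lambda>i. a i + b i"]) (simp add: mpolys_add distrib_right sum.distrib)
qed

lemma ideal_gen_cscale:
  assumes "f \<in> ideal_gen n hs"
  shows "cscale c f \<in> ideal_gen n hs"
proof -
  obtain a where f: "f = (\<Sum>i<length hs. a i * hs ! i)" and a: "\<forall>i<length hs. a i \<in> mpolys n"
    using assms by (auto simp: ideal_gen_def)
  have "cscale c f = (\<Sum>i<length hs. cscale c (a i) * hs ! i)"
    by (simp add: f cscale_def sum_distrib_left mult.assoc)
  then show ?thesis
    using a unfolding ideal_gen_def by (auto intro!: exI[of _ "\<lambda>i. cscale c (a i)"] mpolys_cscale)
qed

lemma subspace_ideal_le:
  "module.subspace (cscale :: kfield \<Rightarrow> kfield mpoly \<Rightarrow> kfield mpoly) (ideal_le (ideal_gen n hs) d)"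
proof -
  interpret vector_space "cscale :: kfield \<Rightarrow> kfield mpoly \<Rightarrow> kfield mpoly"
    by (rule vector_space_cscale)
  have "tdeg m \<le> d" if "m \<in> Poly_Mapping.keys (f + g)" "f \<in> ideal_le I d" "g \<in> ideal_le I d" for m f g I
    using that keys_add[of f g] by (auto simp: ideal_le_def)
  moreover have "tdeg m \<le> d" if "m \<in> Poly_Mapping.keys (cscale c f)" "f \<in> ideal_le I d" for m c f I
    using that keys_cscale[of c f] by (auto simp: ideal_le_def)
  ultimately show ?thesis
    unfolding subspace_def
    by (auto simp: ideal_gen_zero ideal_gen_add ideal_gen_cscale ideal_le_def)
qed

section \<open>Ideal elements supported on the selected monomials\<close>

lemma exists_generic_point_near:
  assumes "finite C" "c0 \<noteq> 0" "\<delta> > 0"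
  shows "\<exists>p. (\<forall>i. cmod (p i - a i) < \<delta>) \<and> (\<forall>c\<in>C. kdefined c p) \<and> kval c0 p \<noteq> 0"
proof -
  obtain Q1 where Q1: "Q1 \<noteq> 0" "\<And>p. qeval Q1 p \<noteq> 0 \<Longrightarrow> \<forall>c\<in>C. kdefined c p"
    using kdefined_generic[OF assms(1)] by blast
  obtain Q2 where Q2: "Q2 \<noteq> 0" "\<And>p. qeval Q2 p \<noteq> 0 \<Longrightarrow> kval c0 p \<noteq> 0"
    using kval_nonzero_generic[OF assms(2)] by blast
  obtain p where "\<forall>i. cmod (p i - a i) < \<delta>" "qeval (Q1 * Q2) p \<noteq> 0"
    using qeval_nonzero_near[of "Q1 * Q2" \<delta> a] Q1(1) Q2(1) assms(3) by auto
  then show ?thesis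
    using Q1(2) Q2(2) by (auto simp: qeval_mult)
qed

lemma kdefined_lookup:
  "(\<And>m. m \<in> Poly_Mapping.keys h \<Longrightarrow> kdefined (Poly_Mapping.lookup h m) p) \<Longrightarrow> kdefined (Poly_Mapping.lookup h m) p"
  by (cases "m \<in> Poly_Mapping.keys h") (auto simp: in_keys_iff kdefined_zero)

lemma coeff_sel_vanishes_at_solution:
  fixes f :: "kfield mpoly" and hs :: "kfield mpoly list"
  assumes f: "f = (\<Sum>i<n. g i * hs ! i)" and "length hs = n"
    and defined: "\<And>i m. i < n \<Longrightarrow> kdefined (Poly_Mapping.lookup (g i) m) p \<and>
                                     kdefined (Poly_Mapping.lookup (hs ! i) m) p"
    and sel: "Poly_Mapping.keys f \<subseteq> set sel" "distinct sel" "length sel = k"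
    and solution: "\<forall>r<k * n + k * k. sysG n k (map (\<lambda>h. spec h p) hs) sel r w = 0"
    and "b < k"
  shows "kval (Poly_Mapping.lookup f (sel ! b)) p = 0"
proof -
  let ?S = "{c. kdefined c p}" and ?\<phi> = "\<lambda>c. kval c p"
  have hom: "ring_hom_on ?S ?\<phi>"
    by (rule ring_hom_on_kval)
  have coeffs: "coeffs_in ?S (g i)" "coeffs_in ?S (hs ! i)" if "i < n" for i
    using defined[OF that] by (auto simp: coeffs_in_def)
  have "meval_with ?\<phi> f (yvec n w c) = 0" if "c < k" for c
  proof -
    have "meval_with ?\<phi> f (yvec n w c) = (\<Sum>i<n. meval_with ?\<phi> (g i * hs ! i) (yvec n w c))"
      unfolding f by (rule meval_with_sum[OF hom]) (simp add: coeffs_in_mult[OF hom] coeffs)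
    also have "\<dots> = (\<Sum>i<n. meval_with ?\<phi> (g i) (yvec n w c) * meval (spec (hs ! i) p) (yvec n w c))"
      unfolding meval_spec by (intro sum.cong refl meval_with_mult[OF hom] coeffs) simp_all
    also have "\<dots> = 0"
      using sysG_zeroD(1)[OF solution that] \<open>length hs = n\<close> by simp
    finally show ?thesis .
  qed
  moreover have "meval_with ?\<phi> f y = (\<Sum>b<k. mono_eval (sel ! b) y * ?\<phi> (Poly_Mapping.lookup f (sel ! b)))"
    for y
  proof -
    have "set sel = (!) sel ` {..<k}" "inj_on ((!) sel) {..<k}"
      using sel(2,3) by (auto simp: set_conv_nth intro!: inj_on_nth)
    then show ?thesis
      using sel(1) by (simp add: meval_with_superset[where U = "set sel"] sum.reindex mult.commute)
  qed
  ultimately have "(\<Sum>b<k. mono_eval (sel ! b) (yvec n w c) * kval (Poly_Mapping.lookup f (sel ! b)) p) = 0"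
    if "c < k" for c
    using that by simp
  from kernel_trivial_if_left_invertible[where u = "\<lambda>b. kval (Poly_Mapping.lookup f (sel ! b)) p",
      OF sysG_zeroD(2)[OF solution] this \<open>b < k\<close>]
  show ?thesis
    by simp
qed

lemma ideal_element_supported_on_sel_eq_0:
  fixes hs :: "kfield mpoly list"
  assumes "length hs = n" "length sel = k" "distinct sel"
    and solvable: "\<exists>P \<delta>. \<delta> > 0 \<and> (\<forall>p. near P \<delta> p p0 \<longrightarrow>
      (\<exists>w. \<forall>r<k * n + k * k. sysG n k (map (\<lambda>h. spec h p) hs) sel r w = 0))"
    and "f \<in> ideal_gen n hs" "Poly_Mapping.keys f \<subseteq> set sel"
  shows "f = 0"
proof (rule ccontr)
  assume "f \<noteq> 0"
  then obtain m where "m \<in> Poly_Mapping.keys f"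
    by (metis all_not_in_conv keys_eq_empty)
  then obtain b where b: "b < k" "Poly_Mapping.lookup f (sel ! b) \<noteq> 0"
    using assms(2,6) by (metis in_keys_iff in_set_conv_nth subsetD)
  obtain g where f: "f = (\<Sum>i<n. g i * hs ! i)"
    using assms(1,5) by (auto simp: ideal_gen_def)
  define C where "C = (\<Union>i<n. Poly_Mapping.lookup (g i) ` Poly_Mapping.keys (g i) \<union>
                              Poly_Mapping.lookup (hs ! i) ` Poly_Mapping.keys (hs ! i))"
  obtain P \<delta> where "\<delta> > 0"
    and solve: "\<And>p. near P \<delta> p p0 \<Longrightarrow> \<exists>w. \<forall>r<k * n + k * k. sysG n k (map (\<lambda>h. spec h p) hs) sel r w = 0"
    using solvable by blast
  obtain p where p: "\<forall>i. cmod (p i - p0 i) < \<delta>" "\<forall>c\<in>C. kdefined c p"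
    and nonzero: "kval (Poly_Mapping.lookup f (sel ! b)) p \<noteq> 0"
  proof -
    have "finite C"
      by (simp add: C_def)
    from exists_generic_point_near[where a = p0, OF this b(2) \<open>\<delta> > 0\<close>] that
    show ?thesis
      by blast
  qed
  have "near P \<delta> p p0"
    using p(1) by (simp add: near_def)
  then obtain w where w: "\<forall>r<k * n + k * k. sysG n k (map (\<lambda>h. spec h p) hs) sel r w = 0"
    using solve by auto
  have defined: "kdefined (Poly_Mapping.lookup (g i) m) p \<and> kdefined (Poly_Mapping.lookup (hs ! i) m) p"
    if "i < n" for i m
    by (intro conjI; rule kdefined_lookup) (use p(2) that in \<open>auto simp: C_def\<close>)
  have "kval (Poly_Mapping.lookup f (sel ! b)) p = 0"
    by (rule coeff_sel_vanishes_at_solution[OF f assms(1) defined assms(6,3,2) w b(1)])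
  then show False
    using nonzero by contradiction
qed

theorem theorem3p1:
  fixes l n k d :: nat
    and hs :: "kfield mpoly list"
    and pstar :: "nat \<Rightarrow> complex"
    and sel :: "(nat \<Rightarrow>\<^sub>0 nat) list"
  assumes "length hs = n"
    and "\<forall>h\<in>set hs. h \<in> mpolys n \<and> (\<forall>m\<in>Poly_Mapping.keys h. in_K l (Poly_Mapping.lookup h m))"
    and "generically_radical_zero_dim l n hs"
    and "\<forall>h\<in>set hs. coeffs_defined h pstar"
    and "length sel = k" and "distinct sel"
    and "\<forall>m\<in>set sel. Poly_Mapping.keys m \<subseteq> {..<n} \<and> tdeg m \<le> d"
    and "\<exists>z. (\<forall>r<k*n + k*k. sysG n k (map (\<lambda>h. spec h pstar) hs) sel r z = 0) \<and>
             Matrix.invertible_mat (jacobian (k*n + k*k) (sysG n k (map (\<lambda>h. spec h pstar) hs) sel) z)"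
  shows "HF n (ideal_gen n hs) d \<ge> int k"
proof -
  have solvable: "\<exists>P \<delta>. \<delta> > 0 \<and> (\<forall>p. near P \<delta> p pstar \<longrightarrow>
      (\<exists>w. \<forall>r<k * n + k * k. sysG n k (map (\<lambda>h. spec h p) hs) sel r w = 0))"
    using assms(1,2,4,5,7,8) sysG_locally_solvable[of hs n pstar sel k] by blast
  define V where "V = ideal_le (ideal_gen n hs) d"
  define T where "T = monomials_le n d - set sel"
  have sel: "set sel \<subseteq> monomials_le n d"
    using assms(7) by (auto simp: monomials_le_def)
  have "Poly_Mapping.keys f \<subseteq> monomials_le n d" if "f \<in> V" for f
    using that ideal_gen_subset_mpolys[of hs n] assms(2) by (auto simp: V_def ideal_le_def mpolys_def monomials_le_def)
  then have "f = 0" if "f \<in> V" "\<forall>m\<in>T. Poly_Mapping.lookup f m = 0" for f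
    using that ideal_element_supported_on_sel_eq_0[OF assms(1,5,6) solvable, of f]
    by (fastforce simp: V_def ideal_le_def T_def in_keys_iff)
  then have "vector_space.dim (cscale :: kfield \<Rightarrow> kfield mpoly \<Rightarrow> kfield mpoly) V \<le> card T"
    using card_monomials_le unfolding V_def T_def
    by (intro dim_le_card_if_coeffs_determine subspace_ideal_le) auto
  moreover have "card T + k = (n + d) choose d"
    unfolding T_def using card_monomials_le_Diff[OF sel assms(6)] assms(5) by simp
  ultimately show ?thesis
    unfolding HF_def V_def by linarith
qed

end
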